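(* Let $X$ be an integral regular projective curve of genus $g$ over $\mathbb{F}_q$ and $\mathbf{n}_m=(n_0,\dots,n_m)$ ($m\ge0$) a tuple of positive integers; put $\mathbf{n}_m+1:=(n_0,\dots,n_{m-1},n_m+1)$. Then $$\alpha^{(\mathbf{n}_m+1)}_X(0)=q_{\mathbf{n}_{m-1}}^{\,n_m(g-1)}\,\alpha^{(\mathbf{n}_{m-1})}_X(0)\cdot\beta_{X;\mathbf{n}_m}.$$
   Context: Let $\zeta_X(s)=\sum_{D\ge 0}N(D)^{-s}$ be the Artin zeta function of $X$ ($D$ running over effective divisors) and $\widehat\zeta_X(s)=q^{s(g-1)}\zeta_X(s)$ the complete Artin zeta function, a rational function of $q^{-s}$. Derived zeta functions are defined recursively. For the empty tuple $\mathbf{n}_{-1}=()$ put $q_{\mathbf{n}_{-1}}=q$, $T_{\mathbf{n}_{-1}}=q^{-s}$, $\widehat\zeta^{(\mathbf{n}_{-1})}_X=\widehat\zeta_X$. For a tuple $\mathbf{n}_m=(n_0,\dots,n_m)$ of positive integers ($m\ge 0$) put $\mathbf{n}_{m-1}=(n_0,\dots,n_{m-1})$, $q_{\mathbf{n}_m}=q^{n_0n_1\cdots n_m}$, $T_{\mathbf{n}_m}=q^{-n_0n_1\cdots n_m s}$. Writing $\widehat Z^{(\mathbf{n}_{m-1})}_X(T_{\mathbf{n}_{m-1}}):=\widehat\zeta^{(\mathbf{n}_{m-1})}_X(s)$ (a rational function of $T_{\mathbf{n}_{m-1}}$), set $\widehat\zeta^{(\mathbf{n}_{m-1})}_X(1):=\operatorname{Res}_{T_{\mathbf{n}_{m-1}}=1}\widehat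 Z^{(\mathbf{n}_{m-1})}_X(T_{\mathbf{n}_{m-1}})$ and for integers $N\ge 1$, $\widehat v_N:=\prod_{k=1}^{N}\widehat\zeta^{(\mathbf{n}_{m-1})}_X(k)$. Then $$\widehat\zeta^{(\mathbf{n}_m)}_X(s)=q_{\mathbf{n}_{m-1}}^{\binom{n_m}{2}(g-1)}\sum_{a=1}^{n_m}\Biggl(\sum_{\substack{k_1,\dots,k_p>0\\k_1+\cdots+k_p=n_m-a}}\frac{\widehat v_{k_1}\cdots\widehat v_{k_p}}{\prod_{j=1}^{p-1}(1-q_{\mathbf{n}_{m-1}}^{k_j+k_{j+1}})}\cdot\frac{1}{1-q_{\mathbf{n}_{m-1}}^{n_ms-n_m+a+k_p}}\Biggr)\widehat\zeta^{(\mathbf{n}_{m-1})}_X(n_ms-n_m+a)\Biggl(\sum_{\substack{l_1,\dots,l_r>0\\l_1+\cdots+l_r=a-1}}\frac{1}{1-q_{\mathbf{n}_{m-1}}^{-n_ms+n_m-a+1+l_1}}\cdot\frac{\widehat v_{l_1}\cdots\widehat v_{l_r}}{\prod_{j=1}^{r-1}(1-q_{\mathbf{n}_{m-1}}^{l_j+l_{j+1}})}\Biggr),$$ where the inner sums run over ordered tuples of positive integers (of any length) with the indicated sum, and an inner sum over tuples summing to $0$ is defined to be $1$. One writes $\widehat Z^{(\mathbf{n}_m)}_X(T_{\mathbf{n}_m}):=\widehat\zeta^{(\mathbf{n}_m)}_X(s)$, a rational function of $T_{\mathbf{n}_m}$. (For $m=0$ this is the $\mathrm{SL}_{n_0}$-zeta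 function of $X$, which coincides with the rank $n_0$ non-abelian zeta function.) For any tuple $\mathbf{n}$ (including the empty one), $(1-T_{\mathbf{n}})(1-q_{\mathbf{n}}T_{\mathbf{n}})T_{\mathbf{n}}^{g-1}\widehat Z^{(\mathbf{n})}_X(T_{\mathbf{n}})$ is a polynomial in $T_{\mathbf{n}}$, and the alpha invariant $\alpha^{(\mathbf{n})}_X(0)$ is its constant term. The beta invariant is $\beta_{X;\mathbf{n}_m}:=\operatorname{Res}_{T_{\mathbf{n}_m}=1}\widehat Z^{(\mathbf{n}_m)}_X(T_{\mathbf{n}_m})$. *)

theory Defs
  imports "HOL-Complex_Analysis.Complex_Analysis" "HOL-Computational_Algebra.Polynomial"
begin

text \<open>Zeta-function data of an integral regular projective curve X of genus g over F_q:
  by the rationality theorem Z_X(T) = P(T) / ((1-T)(1-qT)) with P an integer polynomial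
  of degree 2g, P(0) = 1, satisfying the functional equation
  P(T) = q^g T^(2g) P(1/(qT)), i.e. coeff P (2g - i) = q^(g-i) coeff P i.\<close>
definition curve_zeta_data :: "nat \<Rightarrow> nat \<Rightarrow> int poly \<Rightarrow> bool" where
  "curve_zeta_data q g P \<longleftrightarrow>
     (\<exists>p r. prime p \<and> r > 0 \<and> q = p ^ r) \<and>
     degree P = 2 * g \<and> coeff P 0 = 1 \<and>
     (\<forall>i\<le>g. coeff P (2 * g - i) = int q ^ (g - i) * coeff P i)"

text \<open>Complete Artin zeta function as a function of T = q^(-s):
  Zhat(T) = T^(-(g-1)) Z(T).\<close>
definition complete_zeta :: "nat \<Rightarrow> nat \<Rightarrow> int poly \<Rightarrow> complex \<Rightarrow> complex" where
  "complete_zeta q g P T =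
     T powi (1 - int g) * poly (map_poly of_int P) T / ((1 - T) * (1 - of_nat q * T))"

text \<open>zeta(k) for a derived zeta function given as a rational function Z of
  T = Q^(-s): the residue at T = 1 for k = 1, the value at T = Q^(-k) otherwise
  (taken as a limit, so as to be insensitive to removable singularities).\<close>
definition zeta_val :: "nat \<Rightarrow> (complex \<Rightarrow> complex) \<Rightarrow> nat \<Rightarrow> complex" where
  "zeta_val Q Z k = (if k = 1 then residue Z 1 else Lim (at (of_nat Q powi (- int k))) Z)"

definition vhat :: "nat \<Rightarrow> (complex \<Rightarrow> complex) \<Rightarrow> nat \<Rightarrow> complex" where
  "vhat Q Z N = (\<Prod>k=1..N. zeta_val Q Z k)"

definition compositions :: "nat \<Rightarrow> nat list set" where
  "compositions N = {ks. 0 \<notin> set ks \<and> sum_list ks = N}"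

definition comp_coeff :: "nat \<Rightarrow> (complex \<Rightarrow> complex) \<Rightarrow> nat list \<Rightarrow> complex" where
  "comp_coeff Q Z ks =
     (\<Prod>k\<leftarrow>ks. vhat Q Z k) /
     (\<Prod>j<length ks - 1. (1 - of_nat Q ^ (ks ! j + ks ! Suc j)))"

text \<open>One derivation step: from the derived zeta function Z (in the variable
  T' = Q^(-s), Q = q_(n_(m-1))) to the next one, in the variable T = Q^(-n s).
  Here Q^(n s) = 1/T and Q^(-(n s - n + a)) = T Q^(n-a).\<close>
definition derive_zeta :: "nat \<Rightarrow> nat \<Rightarrow> nat \<Rightarrow> (complex \<Rightarrow> complex) \<Rightarrow> complex \<Rightarrow> complex" where
  "derive_zeta Q g n Z T =
     of_nat Q powi (int (n choose 2) * (int g - 1)) *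
     (\<Sum>a=1..n.
        (if n - a = 0 then 1 else
           (\<Sum>ks\<in>compositions (n - a).
              comp_coeff Q Z ks * (1 / (1 - of_nat Q powi (int a + int (last ks) - int n) / T))))
        * Z (T * of_nat Q ^ (n - a))
        * (if a - 1 = 0 then 1 else
           (\<Sum>ls\<in>compositions (a - 1).
              (1 / (1 - T * of_nat Q ^ (n - a + 1 + hd ls))) * comp_coeff Q Z ls)))"

definition q_tuple :: "nat \<Rightarrow> nat list \<Rightarrow> nat" where
  "q_tuple q ns = q ^ prod_list ns"

fun derived_zeta_rev :: "nat \<Rightarrow> nat \<Rightarrow> int poly \<Rightarrow> nat list \<Rightarrow> complex \<Rightarrow> complex" where
  "derived_zeta_rev q g P [] = complete_zeta q g P"
| "derived_zeta_rev q g P (n # ns) =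
     derive_zeta (q_tuple q (rev ns)) g n (derived_zeta_rev q g P ns)"

definition derived_zeta :: "nat \<Rightarrow> nat \<Rightarrow> int poly \<Rightarrow> nat list \<Rightarrow> complex \<Rightarrow> complex" where
  "derived_zeta q g P ns = derived_zeta_rev q g P (rev ns)"

definition alpha_inv :: "nat \<Rightarrow> nat \<Rightarrow> int poly \<Rightarrow> nat list \<Rightarrow> complex" where
  "alpha_inv q g P ns =
     coeff (THE p. \<forall>\<^sub>F T in cofinite.
        poly p T = (1 - T) * (1 - of_nat (q_tuple q ns) * T) * T powi (int g - 1)
                   * derived_zeta q g P ns T) 0"

definition beta_inv :: "nat \<Rightarrow> nat \<Rightarrow> int poly \<Rightarrow> nat list \<Rightarrow> complex" where
  "beta_inv q g P ns = residue (derived_zeta q g P ns) 1"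

end

theory Submission
  imports Defs
begin

text \<open>
  Write Q for q_(n_(m-1)). The previous derived zeta function has the form
  Z(T) = T^(1-g) p(T) / ((1 - T)(1 - Q T)) with p(T) = Q^g T^(2g) p(1/(Q T)), and the next one
  is D(T) = Q^(C(n,2)(g-1)) \<Sum>_a L_a(T) Z(Q^(n-a) T) R_a(T), where the rational weights L_a, R_a
  are finite sums over compositions. All poles of D lie at 0 and at T = Q^(-m), 0 \<le> m \<le> n.
  The substitution T \<mapsto> 1/(Q^n T) exchanges L_a and R_(n+1-a) and fixes D. At an interior point
  Q^(-m), 0 < m < n, the residues of the summands a \<le> n - m and a > n - m are opposite, so they
  cancel; the remaining poles at 1 and Q^(-n) are cancelled by the factors 1 - T and 1 - Q^n T.
  Hence F(T) = (1 - T)(1 - Q^n T) T^(g-1) D(T) is entire after removing singularities, and by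
  the functional equation it grows at most like |T|^(2g): by Liouville it is a polynomial, and D
  has the same form as Z with Q replaced by Q^n.

  Near T = 0 only the summand a = n survives, so F(0) = Q^(C(n,2)(g-1)) p(0) S_(n-1), while the
  residue of D at T = 1 is Q^(C(n,2)(g-1)) S_n, where S_N is the sum of the coefficients attached
  to the compositions of N. Comparing level n + 1 with level n and using
  C(n+1,2) = C(n,2) + n gives the theorem.
\<close>

section \<open>Compositions\<close>

lemma compositions_0: "compositions 0 = {[]}"
  by (auto simp: compositions_def sum_list_eq_0_iff) (metis list.set_sel(1))

lemma finite_compositions: "finite (compositions N)"
proof -
  have "length ks \<le> sum_list ks" if "0 \<notin> set ks" for ks :: "nat list"
    using that by (induction ks) (auto simp: Suc_le_eq)
  then have "compositions N \<subseteq> {xs. set xs \<subseteq> {0..N} \<and> length xs \<le> N}"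
    by (fastforce simp: compositions_def intro: member_le_sum_list)
  then show ?thesis
    by (rule finite_subset) (rule finite_lists_length_le, simp)
qed

lemma compositions_nonempty: "N > 0 \<Longrightarrow> ks \<in> compositions N \<Longrightarrow> ks \<noteq> []"
  by (auto simp: compositions_def)

lemma Cons_in_compositions_iff:
  "j # ls \<in> compositions N \<longleftrightarrow> j > 0 \<and> j \<le> N \<and> ls \<in> compositions (N - j)"
  by (auto simp: compositions_def)

lemma snoc_in_compositions_iff:
  "ls @ [j] \<in> compositions N \<longleftrightarrow> j > 0 \<and> j \<le> N \<and> ls \<in> compositions (N - j)"
  by (auto simp: compositions_def)

lemma rev_in_compositions_iff: "rev ks \<in> compositions N \<longleftrightarrow> ks \<in> compositions N"
  by (auto simp: compositions_def sum_list_rev)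

lemma compositions_hd_bounds: "N > 0 \<Longrightarrow> ks \<in> compositions N \<Longrightarrow> hd ks \<in> {1..N}"
  by (cases ks) (auto simp: compositions_def)

lemma compositions_last_bounds: "N > 0 \<Longrightarrow> ks \<in> compositions N \<Longrightarrow> last ks \<in> {1..N}"
  using compositions_hd_bounds[of N "rev ks"] by (simp add: rev_in_compositions_iff hd_rev)

lemma sum_compositions_rev: "(\<Sum>ks\<in>compositions N. f ks) = (\<Sum>ks\<in>compositions N. f (rev ks))"
proof (rule sum.reindex_bij_betw[symmetric])
  show "bij_betw rev (compositions N) (compositions N)"
    by (rule bij_betw_byWitness[where f'=rev]) (auto simp: rev_in_compositions_iff)
qed

lemma compositions_hd_eq:
  assumes "0 < j" "j \<le> N"
  shows "{ks \<in> compositions N. hd ks = j} = (#) j ` compositions (N - j)"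
proof (intro equalityI subsetI)
  fix ks assume ks: "ks \<in> {ks \<in> compositions N. hd ks = j}"
  then have "ks \<noteq> []" using assms compositions_nonempty[of N ks] by simp
  then have "ks = j # tl ks" using ks by (cases ks) auto
  with ks show "ks \<in> (#) j ` compositions (N - j)"
    using Cons_in_compositions_iff[of j "tl ks" N] by auto
qed (use assms in \<open>auto simp: Cons_in_compositions_iff\<close>)

lemma compositions_last_eq:
  assumes "0 < j" "j \<le> N"
  shows "{ks \<in> compositions N. last ks = j} = (\<lambda>ls. ls @ [j]) ` compositions (N - j)"
proof (intro equalityI subsetI)
  fix ks assume ks: "ks \<in> {ks \<in> compositions N. last ks = j}"
  then have "ks \<noteq> []" using assms compositions_nonempty[of N ks] by simp
  moreover have "last ks = j" using ks by simp
  ultimately have "ks = butlast ks @ [j]" by (metis append_butlast_last_id)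
  with ks show "ks \<in> (\<lambda>ls. ls @ [j]) ` compositions (N - j)"
    using snoc_in_compositions_iff[of "butlast ks" j N] by auto
qed (use assms in \<open>auto simp: snoc_in_compositions_iff\<close>)

lemma sum_compositions_hd_eq:
  "0 < j \<Longrightarrow> j \<le> N \<Longrightarrow>
    (\<Sum>ks\<in>{ks\<in>compositions N. hd ks = j}. f ks) = (\<Sum>ls\<in>compositions (N - j). f (j # ls))"
  by (simp add: compositions_hd_eq sum.reindex)

lemma sum_compositions_last_eq:
  "0 < j \<Longrightarrow> j \<le> N \<Longrightarrow>
    (\<Sum>ks\<in>{ks\<in>compositions N. last ks = j}. f ks) = (\<Sum>ls\<in>compositions (N - j). f (ls @ [j]))"
  by (simp add: compositions_last_eq sum.reindex inj_on_def)

lemma comp_coeff_Nil: "comp_coeff Q Z [] = 1"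
  by (simp add: comp_coeff_def)

lemma comp_coeff_singleton: "comp_coeff Q Z [j] = vhat Q Z j"
  by (simp add: comp_coeff_def)

lemma comp_coeff_Cons:
  assumes "ls \<noteq> []"
  shows "comp_coeff Q Z (j # ls) = vhat Q Z j * comp_coeff Q Z ls / (1 - of_nat Q ^ (j + hd ls))"
proof -
  obtain k where k: "length ls = Suc k" using assms by (cases ls) auto
  have "(\<Prod>i<length (j # ls) - 1. (1 - (of_nat Q::complex) ^ ((j # ls) ! i + (j # ls) ! Suc i)))
      = (1 - of_nat Q ^ (j + hd ls)) * (\<Prod>i<length ls - 1. (1 - of_nat Q ^ (ls ! i + ls ! Suc i)))"
    using k assms by (simp add: prod.lessThan_Suc_shift hd_conv_nth del: prod.lessThan_Suc)
  then show ?thesis by (simp add: comp_coeff_def field_simps)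
qed

lemma comp_coeff_snoc:
  assumes "ks \<noteq> []"
  shows "comp_coeff Q Z (ks @ [j]) = comp_coeff Q Z ks * vhat Q Z j / (1 - of_nat Q ^ (last ks + j))"
proof -
  obtain k where k: "length ks = Suc k" using assms by (cases ks) auto
  have "(\<Prod>i<length (ks @ [j]) - 1. (1 - (of_nat Q::complex) ^ ((ks @ [j]) ! i + (ks @ [j]) ! Suc i)))
      = (\<Prod>i<length ks - 1. (1 - of_nat Q ^ (ks ! i + ks ! Suc i))) * (1 - of_nat Q ^ (last ks + j))"
    using k assms by (simp add: prod.lessThan_Suc nth_append last_conv_nth)
  then show ?thesis by (simp add: comp_coeff_def field_simps)
qed

lemma comp_coeff_rev: "comp_coeff Q Z (rev ks) = comp_coeff Q Z ks"
proof (induction ks)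
  case (Cons j ls)
  show ?case
  proof (cases "ls = []")
    case False
    have "comp_coeff Q Z (rev (j # ls)) = comp_coeff Q Z (rev ls @ [j])" by simp
    also have "\<dots> = comp_coeff Q Z (rev ls) * vhat Q Z j / (1 - of_nat Q ^ (last (rev ls) + j))"
      using False by (simp add: comp_coeff_snoc)
    also have "\<dots> = comp_coeff Q Z (j # ls)"
      using False Cons.IH by (simp add: comp_coeff_Cons last_rev add.commute)
    finally show ?thesis .
  qed simp
qed simp

section \<open>Zeta-type rational functions\<close>

definition zeta_rat :: "nat \<Rightarrow> nat \<Rightarrow> complex poly \<Rightarrow> complex \<Rightarrow> complex" where
  "zeta_rat Q g p T = T powi (1 - int g) * poly p T / ((1 - T) * (1 - of_nat Q * T))"

definition zeta_fe_poly :: "nat \<Rightarrow> nat \<Rightarrow> complex poly \<Rightarrow> bool" where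
  "zeta_fe_poly Q g p \<longleftrightarrow>
     (\<forall>T. T \<noteq> 0 \<longrightarrow> poly p T = of_nat Q ^ g * T ^ (2 * g) * poly p (1 / (of_nat Q * T)))"

lemma power_int_1_minus: "(T::complex) \<noteq> 0 \<Longrightarrow> T powi (1 - int g) = T / T ^ g"
  by (simp add: power_int_diff)

lemma power_int_minus_1: "(T::complex) \<noteq> 0 \<Longrightarrow> T powi (int g - 1) = T ^ g / T"
  by (simp add: power_int_diff)

lemma zeta_rat_altdef: "T \<noteq> 0 \<Longrightarrow> zeta_rat Q g p T = T * poly p T / (T ^ g * ((1 - T) * (1 - of_nat Q * T)))"
  by (simp add: zeta_rat_def power_int_1_minus)

lemma zeta_rat_reflect:
  assumes "zeta_fe_poly Q g p" "Q > 0" "T \<noteq> 0"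
  shows "zeta_rat Q g p (1 / (of_nat Q * T)) = zeta_rat Q g p T"
proof (cases "T = 1 \<or> of_nat Q * T = 1")
  case True
  \<comment> \<open>both sides sit at one of the poles 1, 1/Q, where the division by zero makes them 0\<close>
  then show ?thesis using assms(2) by (auto simp: zeta_rat_def)
next
  case False
  define q where "q = (of_nat Q :: complex)"
  define x where "x = 1 / (q * T)"
  have nz: "q \<noteq> 0" "T \<noteq> 0" "x \<noteq> 0" "q ^ g \<noteq> 0" "T ^ g \<noteq> 0" "q * T - 1 \<noteq> 0" "T - 1 \<noteq> 0"
    using assms False by (auto simp: q_def x_def algebra_simps)
  have "poly p T = q ^ g * T ^ (2 * g) * poly p x"
    using assms(1,3) unfolding zeta_fe_poly_def q_def x_def by auto
  then have px: "poly p x = poly p T / (q ^ g * T ^ (2 * g))"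
    using nz by simp
  have e1: "1 - x = (q * T - 1) / (q * T)" and e2: "1 - q * x = (T - 1) / T"
    using nz by (simp_all add: x_def field_simps)
  have xg: "x ^ g = 1 / (q ^ g * T ^ g)" by (simp add: x_def power_divide power_mult_distrib)
  have T2: "T ^ (2 * g) = T ^ g * T ^ g" by (simp add: mult_2 power_add)
  have "zeta_rat Q g p x = x * poly p x / (x ^ g * ((1 - x) * (1 - q * x)))"
    using nz by (simp add: zeta_rat_altdef q_def)
  also have "\<dots> = T * poly p T / (T ^ g * ((1 - T) * (1 - q * T)))"
    unfolding px e1 e2 xg T2 unfolding x_def using nz by (simp add: field_simps)
  also have "\<dots> = zeta_rat Q g p T" using nz by (simp add: zeta_rat_altdef q_def)
  finally show ?thesis by (simp add: x_def q_def)
qed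

lemma symmetric_coeffs_full_range:
  fixes c :: "nat \<Rightarrow> complex" and q :: complex
  assumes "\<forall>i\<le>g. c (2 * g - i) = q ^ (g - i) * c i"
  shows "i \<le> 2 * g \<Longrightarrow> c (2 * g - i) * q ^ i = q ^ g * c i"
proof -
  assume i: "i \<le> 2 * g"
  show ?thesis
  proof (cases "i \<le> g")
    case True
    have "c (2 * g - i) * q ^ i = q ^ (g - i) * q ^ i * c i" using assms True by simp
    also have "q ^ (g - i) * q ^ i = q ^ g" using True by (simp flip: power_add)
    finally show ?thesis .
  next
    case False
    define i' where "i' = 2 * g - i"
    have i': "i' \<le> g" "i = 2 * g - i'" using False i by (auto simp: i'_def)
    have "c i = q ^ (g - i') * c i'" using assms i' by metis
    then have "q ^ g * c i = q ^ (g + (g - i')) * c i'" by (simp add: power_add)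
    also have "g + (g - i') = i" using i' by simp
    finally show ?thesis using i' by (simp add: mult.commute)
  qed
qed

lemma zeta_fe_poly_of_curve:
  assumes "curve_zeta_data q g P"
  shows "zeta_fe_poly q g (map_poly of_int P)"
proof -
  define p where "p = (map_poly of_int P :: complex poly)"
  have deg: "degree p = 2 * g" using assms by (simp add: p_def degree_map_poly curve_zeta_data_def)
  have cp: "coeff p i = of_int (coeff P i)" for i by (simp add: p_def coeff_map_poly)
  have sym: "\<forall>i\<le>g. coeff p (2 * g - i) = (of_nat q) ^ (g - i) * coeff p i"
    using assms by (simp add: cp curve_zeta_data_def)
  have key: "i \<le> 2 * g \<Longrightarrow> coeff p (2 * g - i) * of_nat q ^ i = of_nat q ^ g * coeff p i" for i
    using symmetric_coeffs_full_range[OF sym] by blast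
  have q0: "(of_nat q :: complex) \<noteq> 0" using assms
    by (auto simp: curve_zeta_data_def prime_gt_0_nat)
  show ?thesis unfolding zeta_fe_poly_def p_def[symmetric]
  proof (intro allI impI)
    fix T :: complex assume T: "T \<noteq> 0"
    have "of_nat q ^ g * T ^ (2 * g) * poly p (1 / (of_nat q * T))
        = (\<Sum>i\<le>2 * g. of_nat q ^ g * T ^ (2 * g) * (coeff p i * (1 / (of_nat q * T)) ^ i))"
      by (simp add: poly_altdef deg sum_distrib_left)
    also have "\<dots> = (\<Sum>i\<le>2 * g. coeff p (2 * g - i) * T ^ (2 * g - i))"
    proof (rule sum.cong[OF refl])
      fix i assume "i \<in> {..2 * g}"
      then have i: "i \<le> 2 * g" by simp
      have TT: "T ^ (2 * g) = T ^ (2 * g - i) * T ^ i" using i by (simp flip: power_add)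
      have "of_nat q ^ g * T ^ (2 * g) * (coeff p i * (1 / (of_nat q * T)) ^ i)
          = (of_nat q ^ g * coeff p i) * T ^ (2 * g - i) * (T ^ i / (of_nat q ^ i * T ^ i))"
        unfolding TT by (simp add: power_divide power_mult_distrib)
      also have "\<dots> = coeff p (2 * g - i) * T ^ (2 * g - i)"
        unfolding key[OF i, symmetric] using q0 T by (simp add: field_simps)
      finally show "of_nat q ^ g * T ^ (2 * g) * (coeff p i * (1 / (of_nat q * T)) ^ i)
          = coeff p (2 * g - i) * T ^ (2 * g - i)" .
    qed
    also have "\<dots> = (\<Sum>i\<le>2 * g. coeff p i * T ^ i)"
      using sum.atLeastAtMost_rev[of "\<lambda>i. coeff p i * T ^ i" 0 "2 * g"]
      by (simp add: atMost_atLeast0)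
    also have "\<dots> = poly p T" by (simp add: poly_altdef deg)
    finally show "poly p T = of_nat q ^ g * T ^ (2 * g) * poly p (1 / (of_nat q * T))" by simp
  qed
qed

lemma curve_zeta_data_q_ge_2: "curve_zeta_data q g P \<Longrightarrow> q \<ge> 2"
proof -
  assume "curve_zeta_data q g P"
  then obtain p r where pr: "prime p" "r > 0" "q = p ^ r" by (auto simp: curve_zeta_data_def)
  have "p \<ge> 2" using pr prime_ge_2_nat by blast
  moreover have "p \<le> p ^ r" using pr \<open>p \<ge> 2\<close> by (simp add: self_le_power)
  ultimately show "q \<ge> 2" using pr by simp
qed

lemma complete_zeta_eq_zeta_rat: "complete_zeta q g P = zeta_rat q g (map_poly of_int P)"
  by (simp add: fun_eq_iff complete_zeta_def zeta_rat_def)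

section \<open>Removable singularities and simple poles\<close>

lemma eventually_at_notin_finite: "finite S \<Longrightarrow> eventually (\<lambda>z. z \<notin> S) (at (x::complex))"
  using islimpt_finite islimpt_iff_eventually by blast

lemma eventually_at_if_cofinite: "eventually P cofinite \<Longrightarrow> eventually P (at (x::complex))"
  using eventually_at_notin_finite[of "{x. \<not> P x}"] by (auto simp: eventually_cofinite elim: eventually_mono)

lemma eq_if_isCont_eventually_eq:
  fixes f g :: "complex \<Rightarrow> complex"
  assumes "isCont f x" "isCont g x" "eventually (\<lambda>z. f z = g z) (at x)"
  shows "f x = g x"
proof -
  have "(f \<longlongrightarrow> g x) (at x)"
    using assms(2,3) by (simp add: isCont_def tendsto_cong)
  then show ?thesis
    using assms(1) isCont_def tendsto_unique at_neq_bot by blast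
qed

lemma bigo_1_if_removable:
  fixes F :: "complex \<Rightarrow> complex"
  assumes "open U" "c \<in> U" "F holomorphic_on (U - {c})" "((\<lambda>z. (z - c) * F z) \<longlongrightarrow> 0) (at c)"
  shows "F \<in> O[at c](\<lambda>_. 1)"
proof -
  have c: "c \<in> interior U" using assms(1,2) by (simp add: interior_open)
  have "\<exists>g. g holomorphic_on U \<and> (\<forall>z \<in> U - {c}. g z = F z)"
    using holomorphic_on_extend_lim[OF assms(3) c] assms(4) by simp
  then obtain B where "eventually (\<lambda>z. norm (F z) \<le> B) (at c)"
    using holomorphic_on_extend_bounded[OF assms(3) c] by blast
  then show ?thesis by (intro bigoI[where c=B]) (auto elim: eventually_mono)
qed

lemma poly_if_removable_singularities_polynomial_growth:
  fixes F :: "complex \<Rightarrow> complex" and S :: "complex set"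
  assumes fin: "finite S" and holo: "F holomorphic_on (- S)"
    and removable: "\<And>c. c \<in> S \<Longrightarrow> ((\<lambda>z. (z - c) * F z) \<longlongrightarrow> 0) (at c)"
    and growth: "\<And>z. A \<le> norm z \<Longrightarrow> norm (F z) \<le> B * norm z ^ N"
  shows "\<exists>p. \<forall>z. z \<notin> S \<longrightarrow> F z = poly p z"
proof -
  have "F \<in> O[at c](\<lambda>_. 1)" if c: "c \<in> S" for c
  proof (rule bigo_1_if_removable[OF _ _ _ removable[OF c]])
    show "open (- (S - {c}))" using fin by (intro open_Compl finite_imp_closed) auto
    show "F holomorphic_on - (S - {c}) - {c}" using holo by (rule holomorphic_on_subset) auto
  qed simp
  then have "\<exists>G. G holomorphic_on UNIV \<and> (\<forall>z\<in>UNIV - S. G z = F z)"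
    using holo by (intro removable_singularities[OF fin]) (auto simp: Compl_eq_Diff_UNIV)
  then obtain G where G: "G holomorphic_on UNIV" "\<And>z. z \<notin> S \<Longrightarrow> G z = F z"
    by blast
  define A' where "A' = max A (1 + (\<Sum>s\<in>S. norm s))"
  have "z \<notin> S" if "A' \<le> norm z" for z
  proof
    assume "z \<in> S"
    then have "norm z \<le> (\<Sum>s\<in>S. norm s)" using fin by (intro member_le_sum) auto
    then show False using that by (simp add: A'_def)
  qed
  then have "norm (G z) \<le> B * norm z ^ N" if "A' \<le> norm z" for z
    using G(2)[of z] growth[of z] that by (simp add: A'_def)
  then have "G z = (\<Sum>k\<le>N. (deriv ^^ k) G 0 / fact k * z ^ k)" for z
    by (rule Liouville_polynomial[OF G(1)])
  then have "G z = poly (\<Sum>k\<le>N. monom ((deriv ^^ k) G 0 / fact k) k) z" for z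
    by (simp add: poly_sum poly_monom)
  then show ?thesis using G(2) by metis
qed

lemma tendsto_residue_mult1:
  fixes f g h :: "complex \<Rightarrow> complex"
  assumes "((\<lambda>T. (T - c) * f T) \<longlongrightarrow> r) F" "(g \<longlongrightarrow> v) F" "(h \<longlongrightarrow> w) F"
  shows "((\<lambda>T. (T - c) * (f T * g T * h T)) \<longlongrightarrow> r * v * w) F"
  using tendsto_mult[OF tendsto_mult[OF assms(1) assms(2)] assms(3)] by (simp add: ac_simps)

lemma tendsto_residue_mult2:
  fixes f g h :: "complex \<Rightarrow> complex"
  assumes "(f \<longlongrightarrow> u) F" "((\<lambda>T. (T - c) * g T) \<longlongrightarrow> r) F" "(h \<longlongrightarrow> w) F"
  shows "((\<lambda>T. (T - c) * (f T * g T * h T)) \<longlongrightarrow> u * r * w) F"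
  using tendsto_mult[OF tendsto_mult[OF assms(1) assms(2)] assms(3)] by (simp add: ac_simps)

lemma tendsto_residue_mult3:
  fixes f g h :: "complex \<Rightarrow> complex"
  assumes "(f \<longlongrightarrow> u) F" "(g \<longlongrightarrow> v) F" "((\<lambda>T. (T - c) * h T) \<longlongrightarrow> r) F"
  shows "((\<lambda>T. (T - c) * (f T * g T * h T)) \<longlongrightarrow> u * v * r) F"
  using tendsto_mult[OF tendsto_mult[OF assms(1) assms(2)] assms(3)] by (simp add: ac_simps)

lemma tendsto_residue_inverse_1_minus_divide:
  fixes c e :: complex
  assumes "c \<noteq> 0"
  shows "((\<lambda>T. (T - c) / (1 - e / T)) \<longlongrightarrow> (if e = c then c else 0)) (at c)"
proof (cases "e = c")
  case True
  have "eventually (\<lambda>T. T = (T - c) / (1 - e / T)) (at c)"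
    using eventually_neq_at_within[of c c] eventually_neq_at_within[of 0 c]
  proof eventually_elim
    case (elim T)
    then have "1 - e / T = (T - c) / T" using True by (simp add: diff_divide_distrib)
    with elim show ?case by simp
  qed
  then have "((\<lambda>T. (T - c) / (1 - e / T)) \<longlongrightarrow> c) (at c)"
    by (rule Lim_transform_eventually[OF tendsto_ident_at])
  then show ?thesis using True by simp
next
  case False
  then have "((\<lambda>T. (T - c) / (1 - e / T)) \<longlongrightarrow> (c - c) / (1 - e / c)) (at c)"
    using assms by (intro tendsto_intros) (auto simp: field_simps)
  then show ?thesis using False by simp
qed

lemma tendsto_residue_inverse_1_minus_mult:
  fixes c e :: complex
  shows "((\<lambda>T. (T - c) / (1 - T * e)) \<longlongrightarrow> (if c * e = 1 then - c else 0)) (at c)"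
proof (cases "c * e = 1")
  case True
  then have "e \<noteq> 0" by auto
  with True have "c = 1 / e" by (simp add: eq_divide_eq)
  have "eventually (\<lambda>T. - c = (T - c) / (1 - T * e)) (at c)"
    using eventually_neq_at_within[of c c]
  proof eventually_elim
    case (elim T)
    have "1 - T * e = - e * (T - c)" using True by (simp add: algebra_simps)
    with elim \<open>e \<noteq> 0\<close> \<open>c = 1 / e\<close> show ?case by simp
  qed
  then have "((\<lambda>T. (T - c) / (1 - T * e)) \<longlongrightarrow> - c) (at c)"
    by (rule Lim_transform_eventually[OF tendsto_const])
  then show ?thesis using True by simp
next
  case False
  then have "((\<lambda>T. (T - c) / (1 - T * e)) \<longlongrightarrow> (c - c) / (1 - c * e)) (at c)"
    by (intro tendsto_intros) auto
  then show ?thesis using False by simp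
qed

lemma diff_mult_divide_reverse_diff:
  fixes x y A K B :: complex
  assumes "y \<noteq> x"
  shows "(x - y) * (A / (K * (y - x) * B)) = - (A / (K * B))"
  using assms by (cases "K * B = 0") (auto simp: field_simps)

section \<open>One derivation step\<close>

locale derivation_step =
  fixes Q :: nat and g :: nat and p :: "complex poly" and n :: nat
  assumes Q2: "Q \<ge> 2" and n1: "n \<ge> 1" and fe: "zeta_fe_poly Q g p"
begin

abbreviation q :: complex where "q \<equiv> of_nat Q"
abbreviation Z where "Z \<equiv> zeta_rat Q g p"
abbreviation coef where "coef \<equiv> comp_coeff Q Z"
abbreviation vh where "vh \<equiv> vhat Q Z"
abbreviation zv where "zv \<equiv> zeta_val Q Z"
abbreviation D where "D \<equiv> derive_zeta Q g n Z"

definition Z_residue_1 :: complex where "Z_residue_1 = - poly p 1 / (1 - q)"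

lemma q_nonzero: "q \<noteq> 0" using Q2 by simp
lemma q_neq_1: "q \<noteq> 1" using Q2 by simp
lemma Q_pos: "Q > 0" using Q2 by simp

lemma q_power_int_eq_iff: "q powi x = q powi y \<longleftrightarrow> x = y"
proof
  assume e: "q powi x = q powi y"
  have "real Q powi x = real Q powi y"
    using arg_cong[OF e, of norm] by (simp add: norm_power_int)
  moreover have "1 < real Q" using Q2 by simp
  ultimately show "x = y"
    by (metis less_irrefl linorder_neqE power_int_strict_increasing)
qed simp

lemma q_power_int_nonzero: "q powi x \<noteq> 0" using q_nonzero by simp

lemma q_power_int_add: "q powi x * q powi y = q powi (x + y)"
  using q_nonzero by (simp add: power_int_add)

lemma q_power_eq_power_int: "q ^ k = q powi int k" by simp

lemma q_power_int_eq_1_iff: "q powi x = 1 \<longleftrightarrow> x = 0"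
  using q_power_int_eq_iff[of x 0] by simp

lemma q_power_int_eq_inverse_q_iff: "q powi x = 1 / q \<longleftrightarrow> x = -1"
  using q_power_int_eq_iff[of x "-1"] by (simp add: power_int_minus divide_inverse)

lemma isCont_Z:
  assumes "c \<noteq> 0" "c \<noteq> 1" "c \<noteq> 1 / q"
  shows "isCont Z c"
proof -
  have "1 - q * c \<noteq> 0" using assms q_nonzero by (auto simp: field_simps)
  moreover have "1 - c \<noteq> 0" using assms by auto
  ultimately show ?thesis unfolding zeta_rat_def using assms
    by (intro continuous_intros) auto
qed

lemma Z_holomorphic: "Z holomorphic_on (- {0, 1, 1 / q})"
  unfolding zeta_rat_def
proof (intro holomorphic_intros)
  fix x assume "x \<in> - {0, 1, 1 / q}"
  hence "1 - x \<noteq> 0" "1 - q * x \<noteq> 0" using q_nonzero by (auto simp: field_simps)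
  thus "(1 - x) * (1 - q * x) \<noteq> 0" by simp
qed auto

lemma Z_scaled_residue_1:
  assumes K: "K \<noteq> 0" and cK: "c * K = 1"
  shows "((\<lambda>T. (T - c) * Z (T * K)) \<longlongrightarrow> Z_residue_1 / K) (at c)"
proof -
  have ev: "eventually (\<lambda>T. - ((T * K) powi (1 - int g)) * poly p (T * K) / (K * (1 - q * (T * K)))
            = (T - c) * Z (T * K)) (at c)"
    using eventually_neq_at_within[of c c]
  proof eventually_elim
    case (elim T)
    have d: "(1 - T * K) * (1 - q * (T * K)) = K * (c - T) * (1 - q * (T * K))"
      using cK by (simp add: algebra_simps)
    have "(T - c) * Z (T * K) = - ((T * K) powi (1 - int g) * poly p (T * K) / (K * (1 - q * (T * K))))"
      unfolding zeta_rat_def d by (rule diff_mult_divide_reverse_diff) (use elim in simp)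
    thus ?case by simp
  qed
  have "((\<lambda>T. - ((T * K) powi (1 - int g)) * poly p (T * K) / (K * (1 - q * (T * K))))
        \<longlongrightarrow> - ((c * K) powi (1 - int g)) * poly p (c * K) / (K * (1 - q * (c * K)))) (at c)"
    using K q_neq_1 cK by (intro tendsto_intros) auto
  moreover have "- ((c * K) powi (1 - int g)) * poly p (c * K) / (K * (1 - q * (c * K))) = Z_residue_1 / K"
    using cK by (simp add: Z_residue_1_def)
  ultimately show ?thesis using Lim_transform_eventually[OF _ ev] by simp
qed

lemma poly_1_eq: "poly p 1 = q ^ g * poly p (1 / q)"
  using fe unfolding zeta_fe_poly_def by (metis mult_1 mult_1_right power_one zero_neq_one)

lemma Z_residue_1_eq_reflected: "Z_residue_1 = (1 / q) powi (1 - int g) * poly p (1 / q) / (1 - 1 / q)"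
proof -
  have a: "(1 / q) powi (1 - int g) = (1 / q) / (1 / q) ^ g"
    using q_nonzero by (simp add: power_int_1_minus)
  have b: "poly p (1 / q) = poly p 1 / q ^ g" using poly_1_eq q_nonzero by (simp add: field_simps)
  have "1 - q \<noteq> 0" "q - 1 \<noteq> 0" using q_neq_1 by auto
  then show ?thesis
    unfolding a b Z_residue_1_def using q_nonzero by (simp add: field_simps power_divide)
qed

lemma Z_scaled_residue_inverse_q:
  assumes K: "K \<noteq> 0" and cK: "c * K * q = 1"
  shows "((\<lambda>T. (T - c) * Z (T * K)) \<longlongrightarrow> - Z_residue_1 / (q * K)) (at c)"
proof -
  have ev: "eventually (\<lambda>T. - ((T * K) powi (1 - int g)) * poly p (T * K) / (q * K * (1 - T * K))
            = (T - c) * Z (T * K)) (at c)"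
    using eventually_neq_at_within[of c c]
  proof eventually_elim
    case (elim T)
    have d: "(1 - T * K) * (1 - q * (T * K)) = (q * K) * (c - T) * (1 - T * K)"
      using cK by (simp add: algebra_simps)
    have "(T - c) * Z (T * K) = - ((T * K) powi (1 - int g) * poly p (T * K) / (q * K * (1 - T * K)))"
      unfolding zeta_rat_def d by (rule diff_mult_divide_reverse_diff) (use elim in simp)
    thus ?case by simp
  qed
  have cK': "c * K = 1 / q" using cK q_nonzero by (simp add: field_simps)
  have ne: "1 - c * K \<noteq> 0"
  proof
    assume "1 - c * K = 0"
    hence "c * K = 1" by simp
    thus False using cK' q_neq_1 q_nonzero by simp
  qed
  have "((\<lambda>T. - ((T * K) powi (1 - int g)) * poly p (T * K) / (q * K * (1 - T * K)))
        \<longlongrightarrow> - ((c * K) powi (1 - int g)) * poly p (c * K) / (q * K * (1 - c * K))) (at c)"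
    using K q_nonzero ne cK' by (intro tendsto_intros) auto
  moreover have "- ((c * K) powi (1 - int g)) * poly p (c * K) / (q * K * (1 - c * K)) = - Z_residue_1 / (q * K)"
    unfolding cK' Z_residue_1_eq_reflected by (simp add: divide_divide_eq_left ac_simps)
  ultimately show ?thesis using Lim_transform_eventually[OF _ ev] by simp
qed

lemma inverse_q_notin_ball_1: "1 / q \<notin> ball 1 (1/2)"
proof -
  have e: "1 - 1 / q = of_real (1 - 1 / real Q)" by simp
  have "1 - 1 / real Q \<ge> 1/2" using Q2 by (simp add: field_simps)
  hence "norm (1 - 1 / q) \<ge> 1/2" unfolding e norm_of_real by linarith
  thus ?thesis by (simp add: dist_norm)
qed

lemma zeta_val_1: "zv 1 = Z_residue_1"
proof -
  have "zv 1 = residue Z 1" by (simp add: zeta_val_def)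
  also have "\<dots> = Z_residue_1"
  proof (rule residue_simple')
    show "open (ball (1::complex) (1/2))" by simp
    show "(1::complex) \<in> ball 1 (1/2)" by simp
    have "ball 1 (1/2) - {1} \<subseteq> - {0, 1, 1 / q}" using inverse_q_notin_ball_1 by auto
    thus "Z holomorphic_on ball 1 (1/2) - {1}" using Z_holomorphic holomorphic_on_subset by blast
    have "((\<lambda>T. (T - 1) * Z (T * 1)) \<longlongrightarrow> Z_residue_1 / 1) (at 1)" by (rule Z_scaled_residue_1) auto
    thus "((\<lambda>w. Z w * (w - 1)) \<longlongrightarrow> Z_residue_1) (at 1)" by (simp add: mult.commute)
  qed
  finally show ?thesis .
qed

lemma zeta_val_eq:
  assumes "k \<ge> 2"
  shows "zv k = Z (q powi (- int k))"
proof -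
  define x where "x = q powi (- int k)"
  have x: "x \<noteq> 0" "x \<noteq> 1" "x \<noteq> 1 / q" unfolding x_def using assms q_power_int_nonzero q_power_int_eq_1_iff q_power_int_eq_inverse_q_iff Q_pos by auto
  have "zv k = Lim (at x) Z" using assms by (simp add: zeta_val_def x_def)
  also have "\<dots> = Z x" by (rule tendsto_Lim) (use isCont_Z[OF x] isCont_def in auto)
  finally show ?thesis by (simp add: x_def)
qed

lemma zeta_val_eq_Z_power:
  assumes "k \<ge> 2"
  shows "zv k = Z (q ^ (k - 1))"
proof -
  have "q * q ^ (k - 1) = q ^ k" using assms by (cases k) auto
  then have "q powi (- int k) = 1 / (q * q ^ (k - 1))"
    by (simp add: power_int_minus divide_inverse)
  then have "zv k = Z (1 / (q * q ^ (k - 1)))" using zeta_val_eq[OF assms] by simp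
  also have "\<dots> = Z (q ^ (k - 1))"
    by (rule zeta_rat_reflect[OF fe Q_pos]) (use q_nonzero in simp)
  finally show ?thesis .
qed

lemma vhat_0: "vh 0 = 1" by (simp add: vhat_def)
lemma vhat_Suc: "vh (Suc j) = vh j * zv (Suc j)" by (simp add: vhat_def)
lemma vhat_1: "vh 1 = Z_residue_1"
proof -
  have "vh 1 = vh 0 * zv 1" using vhat_Suc[of 0] by simp
  thus ?thesis unfolding vhat_0 zeta_val_1 by simp
qed
lemma vhat_Suc_eq_Z_power: "j \<ge> 1 \<Longrightarrow> vh (Suc j) = vh j * Z (q ^ j)"
  using vhat_Suc[of j] zeta_val_eq_Z_power[of "Suc j"] by simp

definition left_sum :: "nat \<Rightarrow> complex \<Rightarrow> complex" where
  "left_sum a T = (if n - a = 0 then 1 else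
           (\<Sum>ks\<in>compositions (n - a).
              comp_coeff Q Z ks * (1 / (1 - of_nat Q powi (int a + int (last ks) - int n) / T))))"

definition right_sum :: "nat \<Rightarrow> complex \<Rightarrow> complex" where
  "right_sum a T = (if a - 1 = 0 then 1 else
           (\<Sum>ls\<in>compositions (a - 1).
              (1 / (1 - T * of_nat Q ^ (n - a + 1 + hd ls))) * comp_coeff Q Z ls))"

definition prefactor :: complex where "prefactor = of_nat Q powi (int (n choose 2) * (int g - 1))"

lemma D_eq: "D T = prefactor * (\<Sum>a=1..n. left_sum a T * Z (T * q ^ (n - a)) * right_sum a T)"
  unfolding derive_zeta_def left_sum_def right_sum_def prefactor_def by simp

lemma left_sum_residue:
  assumes "c \<noteq> 0"
  shows "((\<lambda>T. (T - c) * left_sum a T) \<longlongrightarrow>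
     (if n - a = 0 then 0 else
        (\<Sum>ks\<in>{ks\<in>compositions (n - a). q powi (int a + int (last ks) - int n) = c}. coef ks * c))) (at c)"
proof (cases "n - a = 0")
  case True
  have "((\<lambda>T. (T - c) * 1) \<longlongrightarrow> (c - c) * 1) (at c)" by (intro tendsto_intros)
  then show ?thesis using True by (simp add: left_sum_def)
next
  case False
  define E where "E ks = q powi (int a + int (last ks) - int n)" for ks
  have "((\<lambda>T. \<Sum>ks\<in>compositions (n - a). coef ks * ((T - c) / (1 - E ks / T)))
        \<longlongrightarrow> (\<Sum>ks\<in>compositions (n - a). coef ks * (if E ks = c then c else 0))) (at c)"
    by (intro tendsto_sum tendsto_mult_left tendsto_residue_inverse_1_minus_divide assms)
  moreover have "(\<Sum>ks\<in>compositions (n - a). coef ks * (if E ks = c then c else 0))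
      = (\<Sum>ks\<in>{ks\<in>compositions (n - a). E ks = c}. coef ks * c)"
    unfolding sum.inter_filter[OF finite_compositions] by (rule sum.cong) auto
  ultimately show ?thesis
    using False unfolding left_sum_def E_def by (simp add: sum_distrib_left ac_simps)
qed

lemma left_sum_tendsto:
  assumes c: "c \<noteq> 0"
    and np: "n - a = 0 \<or> (\<forall>ks\<in>compositions (n - a). q powi (int a + int (last ks) - int n) \<noteq> c)"
  shows "(left_sum a \<longlongrightarrow> left_sum a c) (at c)"
proof (cases "n - a = 0")
  case True
  hence "left_sum a = (\<lambda>_. 1)" by (simp add: left_sum_def fun_eq_iff)
  thus ?thesis by simp
next
  case False
  have "((\<lambda>T. \<Sum>ks\<in>compositions (n - a). coef ks * (1 / (1 - q powi (int a + int (last ks) - int n) / T)))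
     \<longlongrightarrow> (\<Sum>ks\<in>compositions (n - a). coef ks * (1 / (1 - q powi (int a + int (last ks) - int n) / c)))) (at c)"
  proof (intro tendsto_sum tendsto_intros)
    fix ks assume ks: "ks \<in> compositions (n - a)"
    show "1 - q powi (int a + int (last ks) - int n) / c \<noteq> 0"
      using np False ks c by (auto simp: field_simps)
  qed (use c in auto)
  thus ?thesis using False unfolding left_sum_def by simp
qed

lemma right_sum_residue:
  "((\<lambda>T. (T - c) * right_sum a T) \<longlongrightarrow>
     (if a - 1 = 0 then 0 else
        - (\<Sum>ls\<in>{ls\<in>compositions (a - 1). c * q ^ (n - a + 1 + hd ls) = 1}. coef ls * c))) (at c)"
proof (cases "a - 1 = 0")
  case True
  have "((\<lambda>T. (T - c) * 1) \<longlongrightarrow> (c - c) * 1) (at c)" by (intro tendsto_intros)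
  then show ?thesis using True by (simp add: right_sum_def)
next
  case False
  define E where "E ls = q ^ (n - a + 1 + hd ls)" for ls
  have "((\<lambda>T. \<Sum>ls\<in>compositions (a - 1). coef ls * ((T - c) / (1 - T * E ls)))
        \<longlongrightarrow> (\<Sum>ls\<in>compositions (a - 1). coef ls * (if c * E ls = 1 then - c else 0))) (at c)"
    by (intro tendsto_sum tendsto_mult_left tendsto_residue_inverse_1_minus_mult)
  moreover have "(\<Sum>ls\<in>compositions (a - 1). coef ls * (if c * E ls = 1 then - c else 0))
      = - (\<Sum>ls\<in>{ls\<in>compositions (a - 1). c * E ls = 1}. coef ls * c)"
  proof -
    have "(\<Sum>ls\<in>compositions (a - 1). coef ls * (if c * E ls = 1 then - c else 0))
        = (\<Sum>ls\<in>compositions (a - 1). - (if c * E ls = 1 then coef ls * c else 0))"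
      by (rule sum.cong) auto
    then show ?thesis by (simp add: sum_negf sum.inter_filter[OF finite_compositions])
  qed
  ultimately show ?thesis
    using False unfolding right_sum_def E_def by (simp add: sum_distrib_left ac_simps)
qed

lemma right_sum_tendsto:
  assumes np: "a - 1 = 0 \<or> (\<forall>ls\<in>compositions (a - 1). c * q ^ (n - a + 1 + hd ls) \<noteq> 1)"
  shows "(right_sum a \<longlongrightarrow> right_sum a c) (at c)"
proof (cases "a - 1 = 0")
  case True
  hence "right_sum a = (\<lambda>_. 1)" by (simp add: right_sum_def fun_eq_iff)
  thus ?thesis by simp
next
  case False
  have "((\<lambda>T. \<Sum>ls\<in>compositions (a - 1). (1 / (1 - T * q ^ (n - a + 1 + hd ls))) * coef ls)
     \<longlongrightarrow> (\<Sum>ls\<in>compositions (a - 1). (1 / (1 - c * q ^ (n - a + 1 + hd ls))) * coef ls)) (at c)"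
  proof (intro tendsto_sum tendsto_intros)
    fix ls assume ls: "ls \<in> compositions (a - 1)"
    show "1 - c * q ^ (n - a + 1 + hd ls) \<noteq> 0" using np False ls by auto
  qed
  thus ?thesis using False unfolding right_sum_def by simp
qed

lemma Z_scaled_tendsto:
  assumes "K \<noteq> 0" "c * K \<noteq> 0" "c * K \<noteq> 1" "c * K \<noteq> 1 / q"
  shows "((\<lambda>T. Z (T * K)) \<longlongrightarrow> Z (c * K)) (at c)"
proof -
  have "isCont Z (c * K)" using isCont_Z assms by blast
  moreover have "((\<lambda>T. T * K) \<longlongrightarrow> c * K) (at c)" by (intro tendsto_intros)
  ultimately show ?thesis using isCont_tendsto_compose by blast
qed

definition pole :: "nat \<Rightarrow> complex" where "pole m = q powi (- int m)"

lemma pole_nonzero: "pole m \<noteq> 0" using q_power_int_nonzero unfolding pole_def by blast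

lemma pole_mult_q_power: "pole m * q ^ k = q powi (int k - int m)"
  unfolding pole_def q_power_eq_power_int q_power_int_add by simp

definition residue_term :: "nat \<Rightarrow> nat \<Rightarrow> complex" where
  "residue_term m a = (if a + m < n then
       (\<Sum>ks\<in>{ks\<in>compositions (n - a). last ks = n - a - m}. coef ks * pole m) * Z (pole m * q ^ (n - a)) * right_sum a (pole m)
     else if a + m = n then left_sum a (pole m) * (Z_residue_1 * pole m) * right_sum a (pole m)
     else if a + m = n + 1 then left_sum a (pole m) * (- (Z_residue_1 * pole m)) * right_sum a (pole m)
     else left_sum a (pole m) * Z (pole m * q ^ (n - a)) *
            (- (\<Sum>ls\<in>{ls\<in>compositions (a - 1). hd ls = a + m - n - 1}. coef ls * pole m)))"

lemma q_power_int_eq_pole_iff: "q powi k = pole m \<longleftrightarrow> k = - int m"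
  unfolding pole_def q_power_int_eq_iff ..

lemma pole_mult_q_power_eq_1_iff: "pole m * q ^ k = 1 \<longleftrightarrow> k = m"
  unfolding pole_mult_q_power q_power_int_eq_1_iff by simp

lemma left_sum_tendsto_pole:
  assumes "n \<le> a + m"
  shows "(left_sum a \<longlongrightarrow> left_sum a (pole m)) (at (pole m))"
proof (rule left_sum_tendsto[OF pole_nonzero])
  have "q powi (int a + int (last ks) - int n) \<noteq> pole m" if "ks \<in> compositions (n - a)" "n - a \<noteq> 0" for ks
    using compositions_last_bounds[of "n - a" ks] that assms by (auto simp: q_power_int_eq_pole_iff)
  then show "n - a = 0 \<or> (\<forall>ks\<in>compositions (n - a). q powi (int a + int (last ks) - int n) \<noteq> pole m)"
    by blast
qed

lemma right_sum_tendsto_pole: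
  assumes "a + m \<le> n + 1"
  shows "(right_sum a \<longlongrightarrow> right_sum a (pole m)) (at (pole m))"
proof (rule right_sum_tendsto)
  have "pole m * q ^ (n - a + 1 + hd ls) \<noteq> 1" if "ls \<in> compositions (a - 1)" "a - 1 \<noteq> 0" for ls
    unfolding pole_mult_q_power_eq_1_iff using compositions_hd_bounds[of "a - 1" ls] that assms by auto
  then show "a - 1 = 0 \<or> (\<forall>ls\<in>compositions (a - 1). pole m * q ^ (n - a + 1 + hd ls) \<noteq> 1)"
    by blast
qed

lemma left_sum_residue_pole:
  assumes "a + m < n"
  shows "((\<lambda>T. (T - pole m) * left_sum a T) \<longlongrightarrow>
           (\<Sum>ks\<in>{ks\<in>compositions (n - a). last ks = n - a - m}. coef ks * pole m)) (at (pole m))"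
proof -
  have "{ks\<in>compositions (n - a). q powi (int a + int (last ks) - int n) = pole m}
      = {ks\<in>compositions (n - a). last ks = n - a - m}"
    using assms by (auto simp: q_power_int_eq_pole_iff)
  then show ?thesis using left_sum_residue[of "pole m" a] pole_nonzero assms by simp
qed

lemma right_sum_residue_pole:
  assumes "n + 1 < a + m" "a \<le> n" "m \<le> n"
  shows "((\<lambda>T. (T - pole m) * right_sum a T) \<longlongrightarrow>
           - (\<Sum>ls\<in>{ls\<in>compositions (a - 1). hd ls = a + m - n - 1}. coef ls * pole m)) (at (pole m))"
proof -
  have "{ls\<in>compositions (a - 1). pole m * q ^ (n - a + 1 + hd ls) = 1}
      = {ls\<in>compositions (a - 1). hd ls = a + m - n - 1}"
    unfolding pole_mult_q_power_eq_1_iff using assms by auto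
  moreover have "a - 1 \<noteq> 0" using assms by simp
  ultimately show ?thesis using right_sum_residue[of "pole m" a] by simp
qed

lemma Z_scaled_tendsto_pole:
  assumes "m \<noteq> k" "m \<noteq> Suc k"
  shows "((\<lambda>T. Z (T * q ^ k)) \<longlongrightarrow> Z (pole m * q ^ k)) (at (pole m))"
proof (rule Z_scaled_tendsto)
  have "pole m * q ^ k * q = pole m * q ^ Suc k" by simp
  then show "pole m * q ^ k \<noteq> 1 / q"
    using assms q_nonzero pole_mult_q_power_eq_1_iff[of m "Suc k"] by (auto simp: field_simps)
qed (use assms q_nonzero pole_nonzero pole_mult_q_power_eq_1_iff in auto)

text \<open>The residue of the a-th summand of D at pole m comes from exactly one of its factors:
  from left_sum if a + m < n, from the simple poles of Z at 1 and 1/q if a + m = n resp.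
  a + m = n + 1, and from right_sum if a + m > n + 1.\<close>

lemma residue_term_tendsto:
  assumes a: "1 \<le> a" "a \<le> n" and m: "m \<le> n"
  shows "((\<lambda>T. (T - pole m) * (left_sum a T * Z (T * q ^ (n - a)) * right_sum a T))
           \<longlongrightarrow> residue_term m a) (at (pole m))"
proof -
  have K: "q ^ (n - a) \<noteq> 0" using q_nonzero by simp
  consider "a + m < n" | "a + m = n" | "a + m = n + 1" | "a + m > n + 1" by linarith
  then show ?thesis
  proof cases
    case 1
    then show ?thesis
      using tendsto_residue_mult1[OF left_sum_residue_pole Z_scaled_tendsto_pole right_sum_tendsto_pole]
      by (simp add: residue_term_def)
  next
    case 2
    then have e: "pole m * q ^ (n - a) = 1" unfolding pole_mult_q_power_eq_1_iff by simp
    then have "Z_residue_1 / q ^ (n - a) = Z_residue_1 * pole m" using K by (simp add: field_simps)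
    then show ?thesis
      using tendsto_residue_mult2[OF left_sum_tendsto_pole Z_scaled_residue_1[OF K e] right_sum_tendsto_pole] 2
      by (simp add: residue_term_def)
  next
    case 3
    then have "pole m * q ^ Suc (n - a) = 1" unfolding pole_mult_q_power_eq_1_iff using a by simp
    then have e: "pole m * q ^ (n - a) * q = 1" by (simp add: ac_simps)
    then have "- Z_residue_1 / (q * q ^ (n - a)) = - (Z_residue_1 * pole m)" using K q_nonzero by (simp add: field_simps)
    then show ?thesis
      using tendsto_residue_mult2[OF left_sum_tendsto_pole Z_scaled_residue_inverse_q[OF K e] right_sum_tendsto_pole] 3
      by (simp add: residue_term_def)
  next
    case 4
    then show ?thesis
      using tendsto_residue_mult3[OF left_sum_tendsto_pole Z_scaled_tendsto_pole right_sum_residue_pole] a m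
      by (simp add: residue_term_def)
  qed
qed

definition right_tail :: "nat \<Rightarrow> nat \<Rightarrow> complex" where
  "right_tail N h = (if N - h = 0 then 1 else (\<Sum>ls\<in>compositions (N - h). coef ls / (1 - q ^ (h + hd ls))))"

definition left_tail :: "nat \<Rightarrow> nat \<Rightarrow> complex" where
  "left_tail N i = (if N - i = 0 then 1 else (\<Sum>ks\<in>compositions (N - i). coef ks / (1 - q ^ (last ks + i))))"

lemma vhat_mult_right_tail:
  assumes "1 \<le> h" "h \<le> N"
  shows "vh h * right_tail N h = (\<Sum>ps\<in>{ps\<in>compositions N. hd ps = h}. coef ps)"
proof -
  have "(\<Sum>ps\<in>{ps\<in>compositions N. hd ps = h}. coef ps) = (\<Sum>ls\<in>compositions (N - h). coef (h # ls))"
    using assms by (intro sum_compositions_hd_eq) auto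
  also have "\<dots> = vh h * right_tail N h"
  proof (cases "N - h = 0")
    case True thus ?thesis by (simp add: right_tail_def compositions_0 comp_coeff_singleton)
  next
    case False
    have "(\<Sum>ls\<in>compositions (N - h). coef (h # ls)) = (\<Sum>ls\<in>compositions (N - h). vh h * (coef ls / (1 - q ^ (h + hd ls))))"
    proof (rule sum.cong[OF refl])
      fix ls assume ls: "ls \<in> compositions (N - h)"
      have "ls \<noteq> []" by (rule compositions_nonempty[OF _ ls]) (use False in simp)
      thus "coef (h # ls) = vh h * (coef ls / (1 - q ^ (h + hd ls)))" by (simp add: comp_coeff_Cons)
    qed
    thus ?thesis using False by (simp add: right_tail_def sum_distrib_left)
  qed
  finally show ?thesis ..
qed

lemma vhat_mult_left_tail:
  assumes "1 \<le> i" "i \<le> N"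
  shows "vh i * left_tail N i = (\<Sum>ks\<in>{ks\<in>compositions N. last ks = i}. coef ks)"
proof -
  have "(\<Sum>ks\<in>{ks\<in>compositions N. last ks = i}. coef ks) = (\<Sum>ls\<in>compositions (N - i). coef (ls @ [i]))"
    using assms by (intro sum_compositions_last_eq) auto
  also have "\<dots> = vh i * left_tail N i"
  proof (cases "N - i = 0")
    case True thus ?thesis by (simp add: left_tail_def compositions_0 comp_coeff_singleton)
  next
    case False
    have "(\<Sum>ls\<in>compositions (N - i). coef (ls @ [i])) = (\<Sum>ls\<in>compositions (N - i). vh i * (coef ls / (1 - q ^ (last ls + i))))"
    proof (rule sum.cong[OF refl])
      fix ls assume ls: "ls \<in> compositions (N - i)"
      have "ls \<noteq> []" by (rule compositions_nonempty[OF _ ls]) (use False in simp)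
      thus "coef (ls @ [i]) = vh i * (coef ls / (1 - q ^ (last ls + i)))" by (simp add: comp_coeff_snoc)
    qed
    thus ?thesis using False by (simp add: left_tail_def sum_distrib_left)
  qed
  finally show ?thesis ..
qed

lemma right_sum_at_pole:
  assumes "a + m \<le> n + 1" "a \<le> n"
  shows "right_sum a (pole m) = (if a - 1 = 0 then 1 else
           (\<Sum>ls\<in>compositions (a - 1). coef ls / (1 - q ^ ((n + 1 - a - m) + hd ls))))"
proof -
  have "pole m * q ^ (n - a + 1 + hd ls) = q ^ ((n + 1 - a - m) + hd ls)" if "a - 1 \<noteq> 0" for ls
  proof -
    have "int (n - a + 1 + hd ls) - int m = int ((n + 1 - a - m) + hd ls)" using assms that by simp
    thus ?thesis unfolding pole_mult_q_power by (simp only: q_power_eq_power_int)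
  qed
  thus ?thesis unfolding right_sum_def by (auto intro!: sum.cong)
qed

lemma left_sum_at_pole:
  assumes "n \<le> a + m"
  shows "left_sum a (pole m) = (if n - a = 0 then 1 else
           (\<Sum>ks\<in>compositions (n - a). coef ks / (1 - q ^ (last ks + (a + m - n)))))"
proof -
  have "q powi (int a + int (last ks) - int n) / pole m = q ^ (last ks + (a + m - n))" for ks
  proof -
    have "q powi (int a + int (last ks) - int n) / pole m = q powi (int a + int (last ks) - int n) * q powi (int m)"
      unfolding pole_def by (simp add: power_int_minus divide_inverse)
    also have "\<dots> = q powi (int a + int (last ks) - int n + int m)" by (rule q_power_int_add)
    also have "int a + int (last ks) - int n + int m = int (last ks + (a + m - n))" using assms by simp
    finally show ?thesis by (simp only: q_power_eq_power_int)
  qed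
  thus ?thesis unfolding left_sum_def by (auto intro!: sum.cong)
qed

lemma right_sum_at_pole_eq_tail:
  assumes "1 \<le> a" "a + m \<le> n" 
  shows "right_sum a (pole m) = right_tail (n - m) (n - m + 1 - a)"
proof -
  have r: "right_sum a (pole m) = (if a - 1 = 0 then 1 else
           (\<Sum>ls\<in>compositions (a - 1). coef ls / (1 - q ^ ((n + 1 - a - m) + hd ls))))"
    by (rule right_sum_at_pole) (use assms in auto)
  have e1: "n - m - (n - m + 1 - a) = a - 1" and e2: "n + 1 - a - m = n - m + 1 - a" using assms by auto
  show ?thesis unfolding right_tail_def e1 r e2 ..
qed

lemma residue_term_left_pole:
  assumes m: "1 \<le> m" and a: "1 \<le> a" "a + m < n"
  shows "residue_term m a = pole m * (\<Sum>ks\<in>compositions m. coef ks / (1 - q ^ (last ks + (n - m - a))))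
                        * (\<Sum>ps\<in>{ps\<in>compositions (n - m). hd ps = n - m + 1 - a}. coef ps)"
proof -
  define j where "j = n - m - a"
  have j: "1 \<le> j" "n - a - m = j" "n - a - j = m" "n - m + 1 - a = Suc j" using a by (auto simp: j_def)
  define A where "A = (\<Sum>ks\<in>compositions m. coef ks / (1 - q ^ (last ks + j)))"
  have "left_tail (n - a) j = A"
    unfolding left_tail_def A_def j(3) using m by simp
  moreover have "vh j * left_tail (n - a) j = (\<Sum>ks\<in>{ks\<in>compositions (n - a). last ks = j}. coef ks)"
    by (rule vhat_mult_left_tail) (use j in auto)
  ultimately have left: "(\<Sum>ks\<in>{ks\<in>compositions (n - a). last ks = j}. coef ks) = vh j * A"
    by simp
  have "int (n - a) - int m = int j" using a by (simp add: j_def)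
  then have "Z (pole m * q ^ (n - a)) = Z (q ^ j)"
    unfolding pole_mult_q_power by (simp only: q_power_eq_power_int)
  then have "residue_term m a = (\<Sum>ks\<in>{ks\<in>compositions (n - a). last ks = j}. coef ks) * pole m
             * Z (q ^ j) * right_tail (n - m) (Suc j)"
    using a right_sum_at_pole_eq_tail[of a m] unfolding residue_term_def j
    by (simp add: sum_distrib_right)
  also have "\<dots> = pole m * A * (vh j * Z (q ^ j) * right_tail (n - m) (Suc j))"
    unfolding left by (simp only: ac_simps)
  also have "vh j * Z (q ^ j) = vh (Suc j)" using vhat_Suc_eq_Z_power[OF j(1)] by simp
  also have "vh (Suc j) * right_tail (n - m) (Suc j) = (\<Sum>ps\<in>{ps\<in>compositions (n - m). hd ps = Suc j}. coef ps)"
    by (rule vhat_mult_right_tail) (use a j in auto)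
  finally show ?thesis unfolding A_def j_def[symmetric] j(4) .
qed

lemma residue_term_pole_1:
  assumes m: "1 \<le> m" and a: "1 \<le> a" "a + m = n"
  shows "residue_term m a = pole m * (\<Sum>ks\<in>compositions m. coef ks / (1 - q ^ (last ks + (n - m - a))))
                        * (\<Sum>ps\<in>{ps\<in>compositions (n - m). hd ps = n - m + 1 - a}. coef ps)"
proof -
  have e: "n - a = m" "a + m - n = 0" "n - m - a = 0" "n - m + 1 - a = 1" using a by auto
  have L: "left_sum a (pole m) = (\<Sum>ks\<in>compositions m. coef ks / (1 - q ^ (last ks + 0)))"
    using left_sum_at_pole[of a m] a m unfolding e by simp
  have R: "right_sum a (pole m) = right_tail (n - m) 1"
    using right_sum_at_pole_eq_tail[of a m] a unfolding e by simp
  have "residue_term m a = left_sum a (pole m) * (Z_residue_1 * pole m) * right_sum a (pole m)"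
    using a by (simp add: residue_term_def)
  also have "\<dots> = pole m * (\<Sum>ks\<in>compositions m. coef ks / (1 - q ^ (last ks + 0))) * (vh 1 * right_tail (n - m) 1)"
    unfolding L R vhat_1 by (simp only: ac_simps)
  also have "vh 1 * right_tail (n - m) 1 = (\<Sum>ps\<in>{ps\<in>compositions (n - m). hd ps = 1}. coef ps)"
    by (rule vhat_mult_right_tail) (use a in auto)
  finally show ?thesis unfolding e .
qed

text \<open>For 1 \<le> a \<le> n - m, the residue comes from the last part j = n - m - a of the left
  composition (or from the pole of Z at 1 when j = 0); merging the part j + 1 with the right
  composition turns it into the head of a composition of n - m.\<close>

lemma residue_term_below:
  assumes m: "1 \<le> m" and a: "1 \<le> a" "a + m \<le> n"
  shows "residue_term m a = pole m * (\<Sum>ks\<in>compositions m. coef ks / (1 - q ^ (last ks + (n - m - a))))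
                        * (\<Sum>ps\<in>{ps\<in>compositions (n - m). hd ps = n - m + 1 - a}. coef ps)"
  using residue_term_left_pole[OF assms(1,2)] residue_term_pole_1[OF assms(1,2)] a
  by (cases "a + m < n") auto

lemma left_sum_at_pole_eq_tail:
  assumes "n \<le> a + m" "a \<le> n" "a + m - n \<ge> 1"
  shows "left_sum a (pole m) = left_tail m (a + m - n)"
proof -
  have r: "left_sum a (pole m) = (if n - a = 0 then 1 else
           (\<Sum>ks\<in>compositions (n - a). coef ks / (1 - q ^ (last ks + (a + m - n)))))"
    by (rule left_sum_at_pole) (use assms in auto)
  have e1: "m - (a + m - n) = n - a" using assms by auto
  show ?thesis unfolding left_tail_def e1 r ..
qed

lemma residue_term_pole_inverse_q:
  assumes m: "1 \<le> m" "m < n" and a: "a + m = n + 1"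
  shows "residue_term m a = - pole m * (\<Sum>ks\<in>{ks\<in>compositions m. last ks = a + m - n}. coef ks)
                        * (\<Sum>ps\<in>compositions (n - m). coef ps / (1 - q ^ (a + m - n - 1 + hd ps)))"
proof -
  define B where "B = (\<Sum>ps\<in>compositions (n - m). coef ps / (1 - q ^ (a + m - n - 1 + hd ps)))"
  have e: "a + m - n = 1" "a - 1 = n - m" "n + 1 - a - m = a + m - n - 1" using a by auto
  have L: "left_sum a (pole m) = left_tail m 1"
    using left_sum_at_pole_eq_tail[of a m] a m unfolding e by simp
  have R: "right_sum a (pole m) = B"
    using right_sum_at_pole[of a m] a m unfolding B_def e(2,3) by simp
  have "residue_term m a = left_sum a (pole m) * (- (Z_residue_1 * pole m)) * right_sum a (pole m)"
    using a by (simp add: residue_term_def)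
  also have "\<dots> = - pole m * (vh 1 * left_tail m 1) * B"
    unfolding L R vhat_1 by (simp only: ac_simps mult_minus_left mult_minus_right)
  also have "vh 1 * left_tail m 1 = (\<Sum>ks\<in>{ks\<in>compositions m. last ks = 1}. coef ks)"
    by (rule vhat_mult_left_tail) (use m in auto)
  finally show ?thesis unfolding B_def e(1) .
qed

lemma residue_term_right_pole:
  assumes m: "1 \<le> m" "m < n" and a: "n + 1 < a + m" "a \<le> n"
  shows "residue_term m a = - pole m * (\<Sum>ks\<in>{ks\<in>compositions m. last ks = a + m - n}. coef ks)
                        * (\<Sum>ps\<in>compositions (n - m). coef ps / (1 - q ^ (a + m - n - 1 + hd ps)))"
proof -
  define i where "i = a + m - n"
  have i: "2 \<le> i" "i \<le> m" "a + m - n - 1 = i - 1" "a - 1 - (i - 1) = n - m" using a m by (auto simp: i_def)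
  define B where "B = (\<Sum>ps\<in>compositions (n - m). coef ps / (1 - q ^ (i - 1 + hd ps)))"
  have "right_tail (a - 1) (i - 1) = B"
    unfolding right_tail_def B_def i(4) using m by simp
  moreover have "vh (i - 1) * right_tail (a - 1) (i - 1) = (\<Sum>ls\<in>{ls\<in>compositions (a - 1). hd ls = i - 1}. coef ls)"
    by (rule vhat_mult_right_tail) (use a m in \<open>auto simp: i_def\<close>)
  ultimately have right: "(\<Sum>ls\<in>{ls\<in>compositions (a - 1). hd ls = i - 1}. coef ls) = vh (i - 1) * B"
    by simp
  have L: "left_sum a (pole m) = left_tail m i"
    unfolding i_def by (rule left_sum_at_pole_eq_tail) (use a in auto)
  have "int (n - a) - int m = - int i" using a by (simp add: i_def)
  then have "Z (pole m * q ^ (n - a)) = zv i"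
    unfolding pole_mult_q_power using zeta_val_eq[OF i(1)] by simp
  then have "residue_term m a = - left_tail m i * zv i * ((\<Sum>ls\<in>{ls\<in>compositions (a - 1). hd ls = i - 1}. coef ls) * pole m)"
    using a m unfolding residue_term_def i(3) i_def[symmetric] L by (simp add: sum_distrib_right)
  also have "\<dots> = - pole m * ((vh (i - 1) * zv i) * left_tail m i) * B"
    unfolding right by (simp add: ac_simps)
  also have "vh (i - 1) * zv i = vh i" using vhat_Suc[of "i - 1"] i by simp
  also have "vh i * left_tail m i = (\<Sum>ks\<in>{ks\<in>compositions m. last ks = i}. coef ks)"
    by (rule vhat_mult_left_tail) (use i in auto)
  finally show ?thesis unfolding B_def i_def[symmetric] .
qed

text \<open>Symmetrically, for a > n - m the residue comes from the first part a + m - n - 1 of the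
  right composition (or from the pole of Z at 1/q), which merges with the left composition.\<close>

lemma residue_term_above:
  assumes m: "1 \<le> m" "m < n" and a: "n < a + m" "a \<le> n"
  shows "residue_term m a = - pole m * (\<Sum>ks\<in>{ks\<in>compositions m. last ks = a + m - n}. coef ks)
                        * (\<Sum>ps\<in>compositions (n - m). coef ps / (1 - q ^ (a + m - n - 1 + hd ps)))"
  using residue_term_pole_inverse_q[OF m] residue_term_right_pole[OF m] a
  by (cases "a + m = n + 1") auto

lemma residue_term_0:
  assumes a: "1 \<le> a" "a \<le> n"
  shows "residue_term 0 a = (\<Sum>ps\<in>{ps\<in>compositions n. hd ps = n + 1 - a}. coef ps)"
proof -
  have pole_0: "pole 0 = 1" by (simp add: pole_def)
  have R: "right_sum a 1 = right_tail n (n + 1 - a)"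
    using right_sum_at_pole_eq_tail[of a 0] a unfolding pole_0 by simp
  have "residue_term 0 a = vh (n + 1 - a) * right_tail n (n + 1 - a)"
  proof (cases "a < n")
    case True
    define j where "j = n - a"
    have j: "1 \<le> j" "n + 1 - a = Suc j" using True by (auto simp: j_def)
    have "vh j * left_tail j j = (\<Sum>ks\<in>{ks\<in>compositions j. last ks = j}. coef ks)"
      by (rule vhat_mult_left_tail) (use j in auto)
    then have "(\<Sum>ks\<in>{ks\<in>compositions (n - a). last ks = n - a}. coef ks) = vh j"
      by (simp add: left_tail_def j_def)
    then have "residue_term 0 a = vh j * Z (q ^ j) * right_tail n (Suc j)"
      using True R unfolding residue_term_def pole_0 j(2) by (simp add: j_def)
    then show ?thesis
      unfolding j(2) using vhat_Suc_eq_Z_power[OF j(1)] by simp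
  next
    case False
    then have "a = n" using a by simp
    then show ?thesis
      using R by (simp add: residue_term_def pole_0 left_sum_def vhat_1[unfolded One_nat_def])
  qed
  also have "\<dots> = (\<Sum>ps\<in>{ps\<in>compositions n. hd ps = n + 1 - a}. coef ps)"
    by (rule vhat_mult_right_tail) (use a in auto)
  finally show ?thesis .
qed

definition cross_sum :: "nat \<Rightarrow> complex" where
  "cross_sum m = (\<Sum>ks\<in>compositions m. \<Sum>ps\<in>compositions (n - m). coef ks * coef ps / (1 - q ^ (last ks + hd ps - 1)))"

definition comp_sum :: "nat \<Rightarrow> complex" where "comp_sum N = (\<Sum>ks\<in>compositions N. coef ks)"

lemma sum_residue_terms_below:
  assumes m: "1 \<le> m" "m < n"
  shows "(\<Sum>a=1..n-m. residue_term m a) = pole m * cross_sum m"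
proof -
  define N where "N = n - m"
  define A where "A e = (\<Sum>ks\<in>compositions m. coef ks / (1 - q ^ (last ks + e)))" for e
  define B where "B h = (\<Sum>ps\<in>{ps\<in>compositions N. hd ps = h}. coef ps)" for h
  have "(\<Sum>a=1..N. residue_term m a) = (\<Sum>a=1..N. pole m * A (N - a) * B (N + 1 - a))"
    by (rule sum.cong[OF refl]) (use m in \<open>auto simp: residue_term_below A_def B_def N_def\<close>)
  also have "\<dots> = (\<Sum>h=1..N. pole m * A (N - (N + 1 - h)) * B (N + 1 - (N + 1 - h)))"
    using sum.atLeastAtMost_rev[of "\<lambda>a. pole m * A (N - a) * B (N + 1 - a)" 1 N] by simp
  also have "\<dots> = (\<Sum>h=1..N. pole m * (\<Sum>ps\<in>{ps\<in>compositions N. hd ps = h}. A (hd ps - 1) * coef ps))"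
  proof (rule sum.cong[OF refl])
    fix h assume h: "h \<in> {1..N}"
    have e: "N - (N + 1 - h) = h - 1" "N + 1 - (N + 1 - h) = h" using h by auto
    show "pole m * A (N - (N + 1 - h)) * B (N + 1 - (N + 1 - h)) = pole m * (\<Sum>ps\<in>{ps\<in>compositions N. hd ps = h}. A (hd ps - 1) * coef ps)"
      unfolding e B_def by (simp add: sum_distrib_left mult.assoc)
  qed
  also have "\<dots> = pole m * (\<Sum>h=1..N. \<Sum>ps\<in>{ps\<in>compositions N. hd ps = h}. A (hd ps - 1) * coef ps)"
    by (simp add: sum_distrib_left)
  also have "(\<Sum>h=1..N. \<Sum>ps\<in>{ps\<in>compositions N. hd ps = h}. A (hd ps - 1) * coef ps)
      = (\<Sum>ps\<in>compositions N. A (hd ps - 1) * coef ps)"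
  proof (rule sum.group)
    show "hd ` compositions N \<subseteq> {1..N}" using compositions_hd_bounds[of N] m by (auto simp: N_def)
  qed (use finite_compositions in auto)
  also have "\<dots> = (\<Sum>ps\<in>compositions N. \<Sum>ks\<in>compositions m. coef ks * coef ps / (1 - q ^ (last ks + hd ps - 1)))"
  proof (rule sum.cong[OF refl])
    fix ps assume ps: "ps \<in> compositions N"
    have "hd ps \<ge> 1" using compositions_hd_bounds[OF _ ps] m by (auto simp: N_def)
    hence e: "last ks + (hd ps - 1) = last ks + hd ps - 1" for ks by simp
    show "A (hd ps - 1) * coef ps = (\<Sum>ks\<in>compositions m. coef ks * coef ps / (1 - q ^ (last ks + hd ps - 1)))"
      unfolding A_def e by (simp add: sum_distrib_right)
  qed
  also have "\<dots> = cross_sum m" unfolding cross_sum_def N_def by (rule sum.swap)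
  finally show ?thesis by (simp add: N_def)
qed

lemma sum_residue_terms_above:
  assumes m: "1 \<le> m" "m < n"
  shows "(\<Sum>a=n-m+1..n. residue_term m a) = - pole m * cross_sum m"
proof -
  define N where "N = n - m"
  define C where "C i = (\<Sum>ks\<in>{ks\<in>compositions m. last ks = i}. coef ks)" for i
  define B where "B e = (\<Sum>ps\<in>compositions N. coef ps / (1 - q ^ (e + hd ps)))" for e
  have "(\<Sum>a=n-m+1..n. residue_term m a) = (\<Sum>a=1 + N..m + N. residue_term m a)" using m by (simp add: N_def)
  also have "\<dots> = (\<Sum>i=1..m. residue_term m (i + N))" by (rule sum.shift_bounds_cl_nat_ivl)
  also have "\<dots> = (\<Sum>i=1..m. - pole m * C i * B (i - 1))"
  proof (rule sum.cong[OF refl])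
    fix i assume i: "i \<in> {1..m}"
    have e: "i + N + m - n = i" using i m by (auto simp: N_def)
    show "residue_term m (i + N) = - pole m * C i * B (i - 1)"
      using residue_term_above[where a="i + N"] m i unfolding e C_def B_def N_def by auto
  qed
  also have "\<dots> = - pole m * (\<Sum>i=1..m. \<Sum>ks\<in>{ks\<in>compositions m. last ks = i}. coef ks * B (last ks - 1))"
    by (simp add: sum_distrib_left sum_distrib_right C_def mult.assoc)
  also have "(\<Sum>i=1..m. \<Sum>ks\<in>{ks\<in>compositions m. last ks = i}. coef ks * B (last ks - 1))
      = (\<Sum>ks\<in>compositions m. coef ks * B (last ks - 1))"
  proof (rule sum.group)
    show "last ` compositions m \<subseteq> {1..m}" using compositions_last_bounds[of m] m by auto
  qed (use finite_compositions in auto)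
  also have "\<dots> = cross_sum m"
    unfolding cross_sum_def N_def[symmetric]
  proof (rule sum.cong[OF refl])
    fix ks assume ks: "ks \<in> compositions m"
    have "last ks \<ge> 1" using compositions_last_bounds[OF _ ks] m by auto
    hence e: "last ks - 1 + hd ps = last ks + hd ps - 1" for ps by simp
    show "coef ks * B (last ks - 1) = (\<Sum>ps\<in>compositions N. coef ks * coef ps / (1 - q ^ (last ks + hd ps - 1)))"
      unfolding B_def e by (simp add: sum_distrib_left)
  qed
  finally show ?thesis .
qed

lemma sum_residue_terms_cancel:
  assumes "1 \<le> m" "m < n"
  shows "(\<Sum>a=1..n. residue_term m a) = 0"
proof -
  have "(\<Sum>a=1..n - m + m. residue_term m a) = (\<Sum>a=1..n - m. residue_term m a) + (\<Sum>a=n - m + 1..n - m + m. residue_term m a)"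
    by (rule sum.ub_add_nat) simp
  also have "n - m + m = n" using assms by simp
  finally show ?thesis using sum_residue_terms_below[OF assms] sum_residue_terms_above[OF assms] by simp
qed

lemma sum_residue_terms_0: "(\<Sum>a=1..n. residue_term 0 a) = comp_sum n"
proof -
  define B where "B h = (\<Sum>ps\<in>{ps\<in>compositions n. hd ps = h}. coef ps)" for h
  have "(\<Sum>a=1..n. residue_term 0 a) = (\<Sum>a=1..n. B (n + 1 - a))"
    by (rule sum.cong[OF refl]) (auto simp: residue_term_0 B_def)
  also have "\<dots> = (\<Sum>h=1..n. B (n + 1 - (n + 1 - h)))"
    using sum.atLeastAtMost_rev[of "\<lambda>a. B (n + 1 - a)" 1 n] by simp
  also have "\<dots> = (\<Sum>h=1..n. B h)" by (rule sum.cong) auto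
  also have "\<dots> = comp_sum n" unfolding B_def comp_sum_def
  proof (rule sum.group)
    show "hd ` compositions n \<subseteq> {1..n}" using compositions_hd_bounds[of n] n1 by auto
  qed (use finite_compositions in auto)
  finally show ?thesis .
qed

lemma D_residue_tendsto:
  assumes m: "m \<le> n"
  shows "((\<lambda>T. (T - pole m) * D T) \<longlongrightarrow> prefactor * (\<Sum>a=1..n. residue_term m a)) (at (pole m))"
proof -
  have "((\<lambda>T. prefactor * (\<Sum>a=1..n. (T - pole m) * (left_sum a T * Z (T * q ^ (n - a)) * right_sum a T)))
        \<longlongrightarrow> prefactor * (\<Sum>a=1..n. residue_term m a)) (at (pole m))"
    by (intro tendsto_mult_left tendsto_sum residue_term_tendsto) (use m in auto)
  moreover have "(\<lambda>T. (T - pole m) * D T) = (\<lambda>T. prefactor * (\<Sum>a=1..n. (T - pole m) * (left_sum a T * Z (T * q ^ (n - a)) * right_sum a T)))"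
    by (simp add: fun_eq_iff D_eq sum_distrib_left ac_simps)
  ultimately show ?thesis by simp
qed

lemma left_sum_reflect:
  assumes T: "T \<noteq> 0" and a: "1 \<le> a" "a \<le> n"
  shows "left_sum a (1 / (q ^ n * T)) = right_sum (n + 1 - a) T"
proof -
  have e1: "n + 1 - a - 1 = n - a" using a by simp
  have e2: "n - (n + 1 - a) + 1 + h = a + h" for h using a by simp
  have pw1: "q powi (int a + int l - int n) / (1 / (q ^ n * T)) = T * q ^ (a + l)" for l
  proof -
    have "q powi (int a + int l - int n) / (1 / (q ^ n * T)) = T * (q powi (int a + int l - int n) * q ^ n)"
      by simp
    also have "q powi (int a + int l - int n) * q ^ n = q powi (int a + int l - int n) * q powi (int n)"
      by simp
    also have "\<dots> = q powi (int a + int l - int n + int n)" by (rule q_power_int_add)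
    also have "\<dots> = q powi (int (a + l))" by simp
    also have "\<dots> = q ^ (a + l)" by (rule power_int_of_nat)
    finally show ?thesis .
  qed
  have "(\<Sum>ks\<in>compositions (n - a). coef ks * (1 / (1 - T * q ^ (a + last ks))))
      = (\<Sum>ls\<in>compositions (n - a). 1 / (1 - T * q ^ (a + hd ls)) * coef ls)"
  proof -
    have "(\<Sum>ks\<in>compositions (n - a). coef ks * (1 / (1 - T * q ^ (a + last ks))))
        = (\<Sum>ls\<in>compositions (n - a). coef (rev ls) * (1 / (1 - T * q ^ (a + last (rev ls)))))"
      by (rule sum_compositions_rev)
    also have "\<dots> = (\<Sum>ls\<in>compositions (n - a). 1 / (1 - T * q ^ (a + hd ls)) * coef ls)"
      by (rule sum.cong[OF refl]) (simp add: comp_coeff_rev last_rev)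
    finally show ?thesis .
  qed
  thus ?thesis unfolding left_sum_def right_sum_def e1 e2 pw1 by simp
qed

lemma right_sum_reflect:
  assumes T: "T \<noteq> 0" and a: "1 \<le> a" "a \<le> n"
  shows "right_sum a (1 / (q ^ n * T)) = left_sum (n + 1 - a) T"
proof -
  have e1: "n - (n + 1 - a) = a - 1" using a by simp
  have pw1: "1 / (q ^ n * T) * q ^ (n - a + 1 + h) = q powi (int (n + 1 - a) + int h - int n) / T" for h
  proof -
    have "1 / (q ^ n * T) * q ^ (n - a + 1 + h) = (q ^ (n - a + 1 + h) * q powi (- int n)) / T"
      using q_nonzero by (simp add: power_int_minus divide_inverse)
    also have "q ^ (n - a + 1 + h) * q powi (- int n) = q powi (int (n - a + 1 + h)) * q powi (- int n)"
      by (simp only: power_int_of_nat)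
    also have "\<dots> = q powi (int (n - a + 1 + h) + - int n)" by (rule q_power_int_add)
    also have "int (n - a + 1 + h) + - int n = int (n + 1 - a) + int h - int n" using a by simp
    finally show ?thesis .
  qed
  have "(\<Sum>ls\<in>compositions (a - 1). 1 / (1 - q powi (int (n + 1 - a) + int (hd ls) - int n) / T) * coef ls)
      = (\<Sum>ks\<in>compositions (a - 1). coef ks * (1 / (1 - q powi (int (n + 1 - a) + int (last ks) - int n) / T)))"
  proof -
    have "(\<Sum>ls\<in>compositions (a - 1). 1 / (1 - q powi (int (n + 1 - a) + int (hd ls) - int n) / T) * coef ls)
        = (\<Sum>ks\<in>compositions (a - 1). 1 / (1 - q powi (int (n + 1 - a) + int (hd (rev ks)) - int n) / T) * coef (rev ks))"
      by (rule sum_compositions_rev)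
    also have "\<dots> = (\<Sum>ks\<in>compositions (a - 1). coef ks * (1 / (1 - q powi (int (n + 1 - a) + int (last ks) - int n) / T)))"
      by (rule sum.cong[OF refl]) (simp add: comp_coeff_rev hd_rev)
    finally show ?thesis .
  qed
  thus ?thesis unfolding left_sum_def right_sum_def e1 pw1 by simp
qed

lemma Z_scaled_reflect:
  assumes T: "T \<noteq> 0" and a: "1 \<le> a" "a \<le> n"
  shows "Z (1 / (q ^ n * T) * q ^ (n - a)) = Z (T * q ^ (n - (n + 1 - a)))"
proof -
  have e: "n - (n + 1 - a) = a - 1" using a by simp
  have "q ^ n = q * q ^ (a - 1) * q ^ (n - a)"
  proof -
    have "n = 1 + (a - 1) + (n - a)" using a by simp
    hence "q ^ n = q ^ (1 + (a - 1) + (n - a))" by simp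
    thus ?thesis by (simp add: power_add)
  qed
  hence "1 / (q ^ n * T) * q ^ (n - a) = 1 / (q * (T * q ^ (a - 1)))"
    using q_nonzero T by (simp add: field_simps)
  moreover have "Z (1 / (q * (T * q ^ (a - 1)))) = Z (T * q ^ (a - 1))"
    by (rule zeta_rat_reflect[OF fe Q_pos]) (use T q_nonzero in simp)
  ultimately show ?thesis unfolding e by simp
qed

lemma D_reflect:
  assumes T: "T \<noteq> 0"
  shows "D (1 / (q ^ n * T)) = D T"
proof -
  have "D (1 / (q ^ n * T)) = prefactor * (\<Sum>a=1..n. left_sum a (1 / (q ^ n * T)) * Z (1 / (q ^ n * T) * q ^ (n - a)) * right_sum a (1 / (q ^ n * T)))"
    by (rule D_eq)
  also have "\<dots> = prefactor * (\<Sum>a=1..n. right_sum (n + 1 - a) T * Z (T * q ^ (n - (n + 1 - a))) * left_sum (n + 1 - a) T)"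
  proof (intro arg_cong[where f="\<lambda>x. prefactor * x"] sum.cong refl)
    fix a assume "a \<in> {1..n}"
    hence a: "1 \<le> a" "a \<le> n" by auto
    show "left_sum a (1 / (q ^ n * T)) * Z (1 / (q ^ n * T) * q ^ (n - a)) * right_sum a (1 / (q ^ n * T))
        = right_sum (n + 1 - a) T * Z (T * q ^ (n - (n + 1 - a))) * left_sum (n + 1 - a) T"
      unfolding left_sum_reflect[OF T a] right_sum_reflect[OF T a] Z_scaled_reflect[OF T a] ..
  qed
  also have "(\<Sum>a=1..n. right_sum (n + 1 - a) T * Z (T * q ^ (n - (n + 1 - a))) * left_sum (n + 1 - a) T)
      = (\<Sum>a=1..n. right_sum (n + 1 - (n + 1 - a)) T * Z (T * q ^ (n - (n + 1 - (n + 1 - a)))) * left_sum (n + 1 - (n + 1 - a)) T)"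
    using sum.atLeastAtMost_rev[of "\<lambda>a. right_sum (n + 1 - a) T * Z (T * q ^ (n - (n + 1 - a))) * left_sum (n + 1 - a) T" 1 n]
    by simp
  also have "\<dots> = (\<Sum>a=1..n. left_sum a T * Z (T * q ^ (n - a)) * right_sum a T)"
    by (rule sum.cong[OF refl]) (auto simp: ac_simps)
  finally show ?thesis by (simp add: D_eq)
qed

lemma left_sum_tendsto_0: "(left_sum a \<longlongrightarrow> (if n - a = 0 then 1 else 0)) (at 0)"
proof (cases "n - a = 0")
  case True
  hence "left_sum a = (\<lambda>_. 1)" by (simp add: left_sum_def fun_eq_iff)
  thus ?thesis using True by simp
next
  case False
  define E where "E ks = q powi (int a + int (last ks) - int n)" for ks
  have "((\<lambda>T. \<Sum>ks\<in>compositions (n - a). coef ks * (1 / (1 - E ks / T))) \<longlongrightarrow> (\<Sum>ks\<in>compositions (n - a). 0)) (at 0)"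
  proof (rule tendsto_sum)
    fix ks assume "ks \<in> compositions (n - a)"
    have E0: "E ks \<noteq> 0" unfolding E_def using q_power_int_nonzero by blast
    have ev: "eventually (\<lambda>T. coef ks * (T / (T - E ks)) = coef ks * (1 / (1 - E ks / T))) (at 0)"
      using eventually_neq_at_within[of 0 0]
    proof eventually_elim
      case (elim T)
      have "1 - E ks / T = (T - E ks) / T" using elim by (simp add: field_simps)
      thus ?case by simp
    qed
    have "((\<lambda>T. coef ks * (T / (T - E ks))) \<longlongrightarrow> coef ks * (0 / (0 - E ks))) (at 0)"
      using E0 by (intro tendsto_intros) auto
    thus "((\<lambda>T. coef ks * (1 / (1 - E ks / T))) \<longlongrightarrow> 0) (at 0)"
      using Lim_transform_eventually[OF _ ev] by simp
  qed
  thus ?thesis using False unfolding left_sum_def E_def by simp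
qed

lemma right_sum_tendsto_0: "(right_sum a \<longlongrightarrow> right_sum a 0) (at 0)"
  by (rule right_sum_tendsto) auto

lemma Z_scaled_tendsto_0:
  assumes K: "K \<noteq> 0"
  shows "((\<lambda>T. T powi (int g - 1) * Z (T * K)) \<longlongrightarrow> K powi (1 - int g) * poly p 0) (at 0)"
proof -
  have ev: "eventually (\<lambda>T. K powi (1 - int g) * poly p (T * K) / ((1 - T * K) * (1 - q * (T * K)))
        = T powi (int g - 1) * Z (T * K)) (at 0)"
    using eventually_neq_at_within[of 0 0]
  proof eventually_elim
    case (elim T)
    have "T powi (int g - 1) * (T * K) powi (1 - int g) = K powi (1 - int g)"
    proof -
      have "T powi (int g - 1) * (T * K) powi (1 - int g) = (T powi (int g - 1) * T powi (1 - int g)) * K powi (1 - int g)"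
        by (simp add: power_int_mult_distrib)
      also have "T powi (int g - 1) * T powi (1 - int g) = T powi (int g - 1 + (1 - int g))"
        using power_int_add[of T "int g - 1" "1 - int g"] elim by simp
      finally show ?thesis by simp
    qed
    thus ?case unfolding zeta_rat_def by (simp add: ac_simps)
  qed
  have "((\<lambda>T. K powi (1 - int g) * poly p (T * K) / ((1 - T * K) * (1 - q * (T * K))))
     \<longlongrightarrow> K powi (1 - int g) * poly p (0 * K) / ((1 - 0 * K) * (1 - q * (0 * K)))) (at 0)"
    by (intro tendsto_intros) auto
  thus ?thesis using Lim_transform_eventually[OF _ ev] by simp
qed

lemma right_sum_n_0: "right_sum n 0 = comp_sum (n - 1)"
proof (cases "n - 1 = 0")
  case True thus ?thesis by (simp add: right_sum_def comp_sum_def compositions_0 comp_coeff_Nil)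
next
  case False thus ?thesis by (simp add: right_sum_def comp_sum_def)
qed

lemma D_tendsto_0: "((\<lambda>T. T powi (int g - 1) * D T) \<longlongrightarrow> prefactor * poly p 0 * comp_sum (n - 1)) (at 0)"
proof -
  have lim: "((\<lambda>T. prefactor * (\<Sum>a=1..n. left_sum a T * (T powi (int g - 1) * Z (T * q ^ (n - a))) * right_sum a T))
     \<longlongrightarrow> prefactor * (\<Sum>a=1..n. (if n - a = 0 then 1 else 0) * ((q ^ (n - a)) powi (1 - int g) * poly p 0) * right_sum a 0)) (at 0)"
    by (intro tendsto_intros left_sum_tendsto_0 Z_scaled_tendsto_0 right_sum_tendsto_0) (use q_nonzero in simp)
  have "(\<Sum>a=1..n. (if n - a = 0 then 1 else 0) * ((q ^ (n - a)) powi (1 - int g) * poly p 0) * right_sum a 0)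
      = (\<Sum>a=1..n. if a = n then poly p 0 * right_sum n 0 else 0)"
    by (rule sum.cong[OF refl]) auto
  also have "\<dots> = poly p 0 * comp_sum (n - 1)" using n1 by (simp add: right_sum_n_0)
  finally have v: "prefactor * (\<Sum>a=1..n. (if n - a = 0 then 1 else 0) * ((q ^ (n - a)) powi (1 - int g) * poly p 0) * right_sum a 0)
     = prefactor * poly p 0 * comp_sum (n - 1)" by simp
  have "(\<lambda>T. T powi (int g - 1) * D T) = (\<lambda>T. prefactor * (\<Sum>a=1..n. left_sum a T * (T powi (int g - 1) * Z (T * q ^ (n - a))) * right_sum a T))"
    by (simp add: fun_eq_iff D_eq sum_distrib_left ac_simps)
  thus ?thesis using lim unfolding v by simp
qed


definition poles :: "complex set" where "poles = insert 0 (pole ` {..n})"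

lemma finite_poles: "finite poles" by (simp add: poles_def)

lemma mult_q_power_eq_1_iff: "T * q ^ k = 1 \<longleftrightarrow> T = pole k"
proof -
  have e: "pole k = inverse (q ^ k)" by (simp add: pole_def power_int_minus)
  have nz: "q ^ k \<noteq> 0" using q_nonzero by simp
  show ?thesis unfolding e
  proof
    assume h: "T * q ^ k = 1"
    have "T = T * q ^ k * inverse (q ^ k)" using nz by simp
    also have "\<dots> = inverse (q ^ k)" using h by simp
    finally show "T = inverse (q ^ k)" .
  next
    assume "T = inverse (q ^ k)"
    thus "T * q ^ k = 1" using nz by simp
  qed
qed

lemma mult_q_power_neq_1: "T \<notin> poles \<Longrightarrow> k \<le> n \<Longrightarrow> T * q ^ k \<noteq> 1"
  by (auto simp: mult_q_power_eq_1_iff poles_def)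

lemma left_sum_holomorphic:
  assumes a: "1 \<le> a" "a \<le> n"
  shows "left_sum a holomorphic_on (- poles)"
proof (cases "n - a = 0")
  case True
  hence "left_sum a = (\<lambda>_. 1)" by (simp add: left_sum_def fun_eq_iff)
  thus ?thesis by simp
next
  case False
  have "left_sum a = (\<lambda>T. \<Sum>ks\<in>compositions (n - a). coef ks * (1 / (1 - q powi (int a + int (last ks) - int n) / T)))"
    using False by (simp add: left_sum_def fun_eq_iff)
  moreover have "(\<lambda>T. \<Sum>ks\<in>compositions (n - a). coef ks * (1 / (1 - q powi (int a + int (last ks) - int n) / T))) holomorphic_on (- poles)"
  proof (intro holomorphic_intros)
    fix ks T assume ks: "ks \<in> compositions (n - a)" and T: "T \<in> - poles"
    have T0: "T \<noteq> 0" using T by (auto simp: poles_def)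
    show "T \<noteq> 0" by (rule T0)
    have l: "last ks \<in> {1..n - a}" using compositions_last_bounds[OF _ ks] False by auto
    have ie: "int a + int (last ks) - int n = - int (n - a - last ks)" using l a by auto
    have "q powi (int a + int (last ks) - int n) = pole (n - a - last ks)"
      unfolding pole_def ie ..
    moreover have "T \<noteq> pole (n - a - last ks)" using T by (auto simp: poles_def)
    ultimately show "1 - q powi (int a + int (last ks) - int n) / T \<noteq> 0" using T0 by (auto simp: field_simps)
  qed
  ultimately show ?thesis by simp
qed

lemma right_sum_holomorphic:
  assumes a: "1 \<le> a" "a \<le> n"
  shows "right_sum a holomorphic_on (- poles)"
proof (cases "a - 1 = 0")
  case True
  hence "right_sum a = (\<lambda>_. 1)" by (simp add: right_sum_def fun_eq_iff)
  thus ?thesis by simp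
next
  case False
  have "right_sum a = (\<lambda>T. \<Sum>ls\<in>compositions (a - 1). (1 / (1 - T * q ^ (n - a + 1 + hd ls))) * coef ls)"
    using False by (simp add: right_sum_def fun_eq_iff)
  moreover have "(\<lambda>T. \<Sum>ls\<in>compositions (a - 1). (1 / (1 - T * q ^ (n - a + 1 + hd ls))) * coef ls) holomorphic_on (- poles)"
  proof (intro holomorphic_intros)
    fix ls T assume ls: "ls \<in> compositions (a - 1)" and T: "T \<in> - poles"
    have l: "hd ls \<in> {1..a - 1}" using compositions_hd_bounds[OF _ ls] False by auto
    have k: "n - a + 1 + hd ls \<le> n" using l a by auto
    have "T * q ^ (n - a + 1 + hd ls) \<noteq> 1" by (rule mult_q_power_neq_1) (use T k in auto)
    thus "1 - T * q ^ (n - a + 1 + hd ls) \<noteq> 0" by simp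
  qed
  ultimately show ?thesis by simp
qed

lemma Z_scaled_holomorphic:
  assumes a: "1 \<le> a" "a \<le> n"
  shows "(\<lambda>T. Z (T * q ^ (n - a))) holomorphic_on (- poles)"
proof -
  have "(Z \<circ> (\<lambda>T. T * q ^ (n - a))) holomorphic_on (- poles)"
  proof (rule holomorphic_on_compose_gen[OF _ Z_holomorphic])
    show "(\<lambda>T. T * q ^ (n - a)) holomorphic_on - poles" by (intro holomorphic_intros)
    show "(\<lambda>T. T * q ^ (n - a)) ` (- poles) \<subseteq> - {0, 1, 1 / q}"
    proof
      fix x assume "x \<in> (\<lambda>T. T * q ^ (n - a)) ` (- poles)"
      then obtain T where T: "T \<notin> poles" "x = T * q ^ (n - a)" by auto
      have "T \<noteq> 0" using T by (auto simp: poles_def)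
      moreover have "T * q ^ (n - a) \<noteq> 1" using mult_q_power_neq_1[OF T(1)] by simp
      moreover have "T * q ^ (Suc (n - a)) \<noteq> 1" by (rule mult_q_power_neq_1[OF T(1)]) (use a in simp)
      hence "T * q ^ (n - a) \<noteq> 1 / q"
      proof (rule contrapos_nn)
        assume h: "T * q ^ (n - a) = 1 / q"
        have "T * q ^ (Suc (n - a)) = (T * q ^ (n - a)) * q" by simp
        also have "\<dots> = 1" unfolding h using q_nonzero by simp
        finally show "T * q ^ (Suc (n - a)) = 1" .
      qed
      ultimately show "x \<in> - {0, 1, 1 / q}" using T q_nonzero by auto
    qed
  qed
  thus ?thesis by (simp add: o_def)
qed

lemma D_holomorphic: "D holomorphic_on (- poles)"
proof -
  have "(\<lambda>T. prefactor * (\<Sum>a=1..n. left_sum a T * Z (T * q ^ (n - a)) * right_sum a T)) holomorphic_on (- poles)"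
    by (intro holomorphic_intros holomorphic_on_sum holomorphic_on_mult left_sum_holomorphic Z_scaled_holomorphic right_sum_holomorphic) auto
  moreover have "D = (\<lambda>T. prefactor * (\<Sum>a=1..n. left_sum a T * Z (T * q ^ (n - a)) * right_sum a T))"
    by (simp add: fun_eq_iff D_eq)
  ultimately show ?thesis by simp
qed

definition D_numer :: "complex \<Rightarrow> complex" where
  "D_numer T = (1 - T) * (1 - q ^ n * T) * T powi (int g - 1) * D T"

definition D_numer_0 :: complex where "D_numer_0 = prefactor * poly p 0 * comp_sum (n - 1)"

lemma zero_in_poles: "0 \<in> poles" by (simp add: poles_def)
lemma pole_in_poles: "m \<le> n \<Longrightarrow> pole m \<in> poles" by (simp add: poles_def)

lemma D_numer_holomorphic: "D_numer holomorphic_on (- poles)"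
proof -
  have "(\<lambda>T. (1 - T) * (1 - q ^ n * T) * T powi (int g - 1) * D T) holomorphic_on (- poles)"
    by (intro holomorphic_intros D_holomorphic) (use zero_in_poles in auto)
  thus ?thesis by (simp add: D_numer_def[abs_def])
qed

lemma D_numer_tendsto_0: "(D_numer \<longlongrightarrow> D_numer_0) (at 0)"
proof -
  have "((\<lambda>T. (1 - T) * (1 - q ^ n * T) * (T powi (int g - 1) * D T)) \<longlongrightarrow> (1 - 0) * (1 - q ^ n * 0) * D_numer_0) (at 0)"
    unfolding D_numer_0_def by (intro tendsto_intros D_tendsto_0)
  thus ?thesis by (simp add: D_numer_def[abs_def] ac_simps)
qed

lemma sum_residue_terms_annihilated:
  assumes "m \<le> n"
  shows "(1 - pole m) * (1 - q ^ n * pole m) * (\<Sum>a=1..n. residue_term m a) = 0"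
proof -
  consider "m = 0" | "m = n" | "1 \<le> m" "m < n" using assms by linarith
  then show ?thesis
  proof cases
    case 1
    then show ?thesis by (simp add: pole_def)
  next
    case 2
    then have "pole m * q ^ n = 1" using mult_q_power_eq_1_iff by simp
    then show ?thesis by (simp add: ac_simps)
  next
    case 3
    then show ?thesis using sum_residue_terms_cancel by simp
  qed
qed

lemma D_numer_removable: "c \<in> poles \<Longrightarrow> ((\<lambda>z. (z - c) * D_numer z) \<longlongrightarrow> 0) (at c)"
proof -
  assume "c \<in> poles"
  then consider "c = 0" | m where "m \<le> n" "c = pole m" by (auto simp: poles_def)
  then show ?thesis
  proof cases
    case 1
    have "((\<lambda>z. (z - 0) * D_numer z) \<longlongrightarrow> (0 - 0) * D_numer_0) (at 0)"
      by (intro tendsto_intros D_numer_tendsto_0)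
    then show ?thesis using 1 by simp
  next
    case 2
    have lim: "((\<lambda>z. ((1 - z) * (1 - q ^ n * z) * z powi (int g - 1)) * ((z - pole m) * D z))
       \<longlongrightarrow> ((1 - pole m) * (1 - q ^ n * pole m) * pole m powi (int g - 1))
            * (prefactor * (\<Sum>a=1..n. residue_term m a))) (at (pole m))"
      (is "(?F \<longlongrightarrow> ?V) _")
      using pole_nonzero by (intro tendsto_intros D_residue_tendsto 2(1)) auto
    have "?V = ((1 - pole m) * (1 - q ^ n * pole m) * (\<Sum>a=1..n. residue_term m a))
        * (pole m powi (int g - 1) * prefactor)"
      by (simp only: ac_simps)
    then have V: "?V = 0"
      by (simp only: sum_residue_terms_annihilated[OF 2(1)] mult_zero_left)
    have F: "(\<lambda>z. (z - pole m) * D_numer z) = ?F"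
      by (simp add: D_numer_def fun_eq_iff ac_simps)
    show ?thesis
      using lim unfolding 2(2) F V .
  qed
qed

lemma D_numer_reflect:
  assumes T: "T \<noteq> 0"
  shows "D_numer T = (q ^ n) ^ g * T ^ (2 * g) * D_numer (1 / (q ^ n * T))"
proof -
  define qn where "qn = q ^ n"
  have q0: "qn \<noteq> 0" using q_nonzero by (simp add: qn_def)
  define w where "w = 1 / (qn * T)"
  have w0: "w \<noteq> 0" using q0 T by (simp add: w_def)
  have Dw: "D w = D T" unfolding w_def qn_def by (rule D_reflect[OF T])
  have "(1 - w) * (1 - qn * w) * w powi (int g - 1) = (1 - T) * (1 - qn * T) * T powi (int g - 1) / (qn ^ g * T ^ (2 * g))"
  proof -
    have e1: "1 - w = (qn * T - 1) / (qn * T)" using q0 T by (simp add: w_def field_simps)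
    have e2: "1 - qn * w = (T - 1) / T" using q0 T by (simp add: w_def field_simps)
    have e3: "w powi (int g - 1) = w ^ g / w" using w0 by (rule power_int_minus_1)
    have e4: "T powi (int g - 1) = T ^ g / T" using T by (rule power_int_minus_1)
    have e5: "w ^ g = 1 / (qn ^ g * T ^ g)" by (simp add: w_def power_divide power_mult_distrib)
    have e6: "T ^ (2 * g) = T ^ g * T ^ g" by (simp add: mult_2 power_add)
    have nz: "qn ^ g \<noteq> 0" "T ^ g \<noteq> 0" using q0 T by auto
    show ?thesis unfolding e1 e2 e3 e4 e5 e6 unfolding w_def using nz q0 T
      by (simp add: field_simps)
  qed
  hence "D_numer (1 / (qn * T)) = (1 - T) * (1 - qn * T) * T powi (int g - 1) / (qn ^ g * T ^ (2 * g)) * D T"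
    unfolding D_numer_def qn_def[symmetric] w_def[symmetric] Dw by simp
  moreover have "qn ^ g * T ^ (2 * g) \<noteq> 0" using q0 T by simp
  ultimately show ?thesis unfolding qn_def[symmetric] by (simp add: D_numer_def qn_def)
qed

text \<open>The functional equation transports the bound of D_numer near 0 to a bound near infinity.\<close>

lemma D_numer_polynomial_growth: "\<exists>A B. \<forall>z. A \<le> norm z \<longrightarrow> norm (D_numer z) \<le> B * norm z ^ (2 * g)"
proof -
  define qn where "qn = q ^ n"
  have q0: "norm qn > 0" using q_nonzero by (simp add: qn_def)
  have "eventually (\<lambda>w. dist (D_numer w) D_numer_0 < 1) (at 0)" using D_numer_tendsto_0 by (rule tendstoD) simp
  then obtain d where d: "d > 0" "\<And>w. w \<noteq> 0 \<Longrightarrow> dist w 0 < d \<Longrightarrow> dist (D_numer w) D_numer_0 < 1"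
    unfolding eventually_at by blast
  define A where "A = 1 / (norm qn * d) + 1"
  define B where "B = norm qn ^ g * (norm D_numer_0 + 1)"
  have "norm (D_numer z) \<le> B * norm z ^ (2 * g)" if z: "A \<le> norm z" for z
  proof -
    have Apos: "A > 1 / (norm qn * d)" by (simp add: A_def)
    have zpos: "norm z > 1 / (norm qn * d)" using z Apos by linarith
    have z0: "z \<noteq> 0" using zpos q0 d by (auto simp: field_simps)
    define w where "w = 1 / (qn * z)"
    have w0: "w \<noteq> 0" using z0 q0 by (auto simp: w_def)
    have "norm w = 1 / (norm qn * norm z)" by (simp add: w_def norm_divide norm_mult)
    also have "\<dots> < d"
    proof -
      have pos: "norm qn * norm z > 0" using z0 q0 by simp
      have "1 < d * (norm qn * norm z)" using zpos q0 d by (simp add: field_simps)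
      thus ?thesis using pos by (simp add: field_simps)
    qed
    finally have "norm (D_numer w - D_numer_0) < 1" using d(2)[OF w0] by (simp add: dist_norm)
    then have Fw: "norm (D_numer w) \<le> norm D_numer_0 + 1"
      using norm_triangle_sub[of "D_numer w" D_numer_0] by linarith
    have "D_numer z = qn ^ g * z ^ (2 * g) * D_numer w" unfolding w_def qn_def by (rule D_numer_reflect[OF z0])
    hence "norm (D_numer z) = norm qn ^ g * norm z ^ (2 * g) * norm (D_numer w)" by (simp add: norm_mult norm_power)
    also have "\<dots> \<le> norm qn ^ g * norm z ^ (2 * g) * (norm D_numer_0 + 1)"
      by (intro mult_left_mono Fw) auto
    finally show ?thesis by (simp add: B_def ac_simps)
  qed
  thus ?thesis by blast
qed

lemma D_numer_eq_poly: "\<exists>p'. \<forall>z. z \<notin> poles \<longrightarrow> D_numer z = poly p' z"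
proof -
  obtain A B where growth: "\<And>z. A \<le> norm z \<Longrightarrow> norm (D_numer z) \<le> B * norm z ^ (2 * g)"
    using D_numer_polynomial_growth by blast
  show ?thesis
    by (rule poly_if_removable_singularities_polynomial_growth[OF finite_poles D_numer_holomorphic D_numer_removable growth])
qed

definition D_numer_poly :: "complex poly" where
  "D_numer_poly = (SOME p'. \<forall>z. z \<notin> poles \<longrightarrow> D_numer z = poly p' z)"

lemma D_numer_eq_D_numer_poly: "z \<notin> poles \<Longrightarrow> D_numer z = poly D_numer_poly z"
  using someI_ex[OF D_numer_eq_poly] unfolding D_numer_poly_def by blast

lemma one_in_poles: "1 \<in> poles" using pole_in_poles[of 0] by (simp add: pole_def)

lemma D_eq_zeta_rat: "z \<notin> poles \<Longrightarrow> D z = zeta_rat (Q ^ n) g D_numer_poly z"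
proof -
  assume z: "z \<notin> poles"
  have "z \<noteq> 0" "1 - z \<noteq> 0" using z zero_in_poles one_in_poles by auto
  moreover have "1 - q ^ n * z \<noteq> 0" using mult_q_power_neq_1[OF z, of n] by (auto simp: ac_simps)
  moreover have "z powi (1 - int g) * z powi (int g - 1) = 1"
    using power_int_add[of z "1 - int g" "int g - 1"] \<open>z \<noteq> 0\<close> by simp
  moreover have "zeta_rat (Q ^ n) g D_numer_poly z = (z powi (1 - int g) * z powi (int g - 1)) * D z
      * (((1 - z) * (1 - q ^ n * z)) / ((1 - z) * (1 - q ^ n * z)))"
    unfolding zeta_rat_def D_numer_eq_D_numer_poly[OF z, symmetric] D_numer_def
    by (simp only: of_nat_power times_divide_eq_right times_divide_eq_left mult_ac)
  ultimately show ?thesis by simp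
qed

lemma zeta_fe_poly_D_numer_poly: "zeta_fe_poly (Q ^ n) g D_numer_poly"
  unfolding zeta_fe_poly_def of_nat_power
proof (intro allI impI)
  fix T :: complex assume T: "T \<noteq> 0"
  define reflect where "reflect s = 1 / (q ^ n * s)" for s
  have reflect_reflect: "reflect (reflect z) = z" for z
    using q_nonzero by (cases "z = 0") (auto simp: reflect_def)
  define E where "E = poles \<union> reflect ` poles"
  have eq: "poly D_numer_poly z = (q ^ n) ^ g * z ^ (2 * g) * poly D_numer_poly (reflect z)" if z: "z \<notin> E" for z
  proof -
    have "reflect z \<notin> poles"
    proof
      assume "reflect z \<in> poles"
      then have "reflect (reflect z) \<in> reflect ` poles" by (rule imageI)
      then show False using z reflect_reflect by (simp add: E_def)
    qed
    moreover have "z \<notin> poles" "z \<noteq> 0" using z zero_in_poles by (auto simp: E_def)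
    ultimately show ?thesis
      using D_numer_reflect[of z] D_numer_eq_D_numer_poly unfolding reflect_def by simp
  qed
  have "finite E" using finite_poles by (simp add: E_def)
  have "eventually (\<lambda>z. poly D_numer_poly z = (q ^ n) ^ g * z ^ (2 * g) * poly D_numer_poly (reflect z)) (at T)"
    using eventually_at_notin_finite[OF \<open>finite E\<close>] by eventually_elim (rule eq)
  moreover have "isCont (\<lambda>z. (q ^ n) ^ g * z ^ (2 * g) * poly D_numer_poly (reflect z)) T"
    unfolding reflect_def using T q_nonzero by (intro continuous_intros) auto
  ultimately show "poly D_numer_poly T = (q ^ n) ^ g * T ^ (2 * g) * poly D_numer_poly (1 / (q ^ n * T))"
    using eq_if_isCont_eventually_eq[where f="poly D_numer_poly"] unfolding reflect_def by simp
qed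

lemma poly_D_numer_poly_0: "poly D_numer_poly 0 = D_numer_0"
proof -
  have "eventually (\<lambda>z. D_numer z = poly D_numer_poly z) (at 0)"
    using eventually_at_notin_finite[OF finite_poles] by eventually_elim (rule D_numer_eq_D_numer_poly)
  then have "(poly D_numer_poly \<longlongrightarrow> D_numer_0) (at 0)"
    by (rule Lim_transform_eventually[OF D_numer_tendsto_0])
  moreover have "(poly D_numer_poly \<longlongrightarrow> poly D_numer_poly 0) (at 0)" by (intro tendsto_intros)
  ultimately show ?thesis using tendsto_unique at_neq_bot by blast
qed

lemma residue_D_1: "residue D 1 = prefactor * comp_sum n"
proof (rule residue_simple')
  show "open (- (poles - {1}))" using finite_poles by (intro open_Compl finite_imp_closed) auto
  have "- (poles - {1}) - {1} = - poles" using one_in_poles by auto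
  then show "D holomorphic_on - (poles - {1}) - {1}" using D_holomorphic by simp
  have "((\<lambda>T. (T - pole 0) * D T) \<longlongrightarrow> prefactor * (\<Sum>a=1..n. residue_term 0 a)) (at (pole 0))"
    by (rule D_residue_tendsto) simp
  then show "((\<lambda>w. D w * (w - 1)) \<longlongrightarrow> prefactor * comp_sum n) (at 1)"
    unfolding sum_residue_terms_0 by (simp add: pole_def mult.commute)
qed simp

end

section \<open>Derived zeta functions\<close>

lemma zeta_val_cong:
  assumes "\<forall>\<^sub>F z in cofinite. Z1 z = Z2 z"
  shows "zeta_val Q Z1 = zeta_val Q Z2"
proof -
  have "eventually (\<lambda>z. Z1 z = Z2 z) (at x)" for x
    using assms by (rule eventually_at_if_cofinite)
  then show ?thesis
    unfolding zeta_val_def fun_eq_iff by (auto intro!: residue_cong Lim_cong)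
qed

lemma comp_coeff_cong:
  "\<forall>\<^sub>F z in cofinite. Z1 z = Z2 z \<Longrightarrow> comp_coeff Q Z1 = comp_coeff Q Z2"
  by (simp add: fun_eq_iff comp_coeff_def vhat_def zeta_val_cong[of Z1 Z2 Q])

lemma derive_zeta_cong:
  assumes Q: "Q > 0" and eq: "\<forall>\<^sub>F z in cofinite. Z1 z = Z2 z"
  shows "\<forall>\<^sub>F T in cofinite. derive_zeta Q g n Z1 T = derive_zeta Q g n Z2 T"
proof -
  define E where "E = {z. Z1 z \<noteq> Z2 z}"
  have "finite E" using eq by (simp add: eventually_cofinite E_def)
  then have fin: "finite (\<Union>a\<in>{1..n}. (\<lambda>x. x / of_nat Q ^ (n - a)) ` E)" by simp
  have eq_outside: "derive_zeta Q g n Z1 T = derive_zeta Q g n Z2 T"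
    if T: "T \<notin> (\<Union>a\<in>{1..n}. (\<lambda>x. x / of_nat Q ^ (n - a)) ` E)" for T
  proof -
    have "T * of_nat Q ^ (n - a) \<notin> E" if "a \<in> {1..n}" for a
      using T that Q by force
    then show ?thesis
      unfolding derive_zeta_def comp_coeff_cong[OF eq]
      by (intro arg_cong2[where f="(*)"] refl sum.cong) (simp_all add: E_def)
  qed
  show ?thesis
    unfolding eventually_cofinite by (rule finite_subset[OF _ fin]) (use eq_outside in blast)
qed

lemma derive_zeta_rat:
  assumes "Q \<ge> 2" "n \<ge> 1" "zeta_fe_poly Q g p" and Z: "\<forall>\<^sub>F T in cofinite. Z T = zeta_rat Q g p T"
  shows "\<exists>p'. zeta_fe_poly (Q ^ n) g p'
     \<and> (\<forall>\<^sub>F T in cofinite. derive_zeta Q g n Z T = zeta_rat (Q ^ n) g p' T)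
     \<and> poly p' 0 = of_nat Q powi (int (n choose 2) * (int g - 1)) * poly p 0
                    * (\<Sum>ks\<in>compositions (n - 1). comp_coeff Q Z ks)
     \<and> residue (derive_zeta Q g n Z) 1
         = of_nat Q powi (int (n choose 2) * (int g - 1)) * (\<Sum>ks\<in>compositions n. comp_coeff Q Z ks)"
proof -
  interpret derivation_step Q g p n using assms by unfold_locales
  have "\<forall>\<^sub>F T in cofinite. derive_zeta Q g n Z T = D T"
    using derive_zeta_cong[OF Q_pos Z] .
  moreover have "\<forall>\<^sub>F T in cofinite. D T = zeta_rat (Q ^ n) g D_numer_poly T"
    unfolding eventually_cofinite by (rule finite_subset[OF _ finite_poles]) (use D_eq_zeta_rat in auto)
  ultimately have "\<forall>\<^sub>F T in cofinite. derive_zeta Q g n Z T = zeta_rat (Q ^ n) g D_numer_poly T"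
    by eventually_elim simp
  moreover have "residue (derive_zeta Q g n Z) 1 = residue D 1"
    using \<open>\<forall>\<^sub>F T in cofinite. derive_zeta Q g n Z T = D T\<close>
    by (intro residue_cong eventually_at_if_cofinite) auto
  ultimately show ?thesis
    using zeta_fe_poly_D_numer_poly poly_D_numer_poly_0 residue_D_1
    unfolding D_numer_0_def prefactor_def comp_sum_def comp_coeff_cong[OF Z] by auto
qed

lemma derived_zeta_snoc:
  "derived_zeta q g P (ms @ [n]) = derive_zeta (q_tuple q ms) g n (derived_zeta q g P ms)"
  by (simp add: derived_zeta_def)

lemma q_tuple_snoc: "q_tuple q (ms @ [n]) = q_tuple q ms ^ n"
  by (simp add: q_tuple_def power_mult)

lemma q_tuple_ge_2:
  assumes "q \<ge> 2" "\<forall>k\<in>set ms. k > 0"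
  shows "q_tuple q ms \<ge> 2"
proof -
  have "prod_list ms > 0" using assms(2) by (induction ms) auto
  then have "q \<le> q ^ prod_list ms" using assms(1) by (simp add: self_le_power)
  then show ?thesis using assms(1) by (simp add: q_tuple_def)
qed

lemma derived_zeta_eq_zeta_rat:
  assumes "curve_zeta_data q g P" "\<forall>k\<in>set ms. k > 0"
  shows "\<exists>p. zeta_fe_poly (q_tuple q ms) g p
           \<and> (\<forall>\<^sub>F T in cofinite. derived_zeta q g P ms T = zeta_rat (q_tuple q ms) g p T)"
  using assms(2)
proof (induction ms rule: rev_induct)
  case Nil
  show ?case
    using zeta_fe_poly_of_curve[OF assms(1)]
    by (auto simp: derived_zeta_def q_tuple_def complete_zeta_eq_zeta_rat)
next
  case (snoc n ms)
  then obtain p where "zeta_fe_poly (q_tuple q ms) g p"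
      "\<forall>\<^sub>F T in cofinite. derived_zeta q g P ms T = zeta_rat (q_tuple q ms) g p T"
    by auto
  moreover have "q_tuple q ms \<ge> 2" "n \<ge> 1"
    using q_tuple_ge_2 curve_zeta_data_q_ge_2[OF assms(1)] snoc.prems by auto
  ultimately show ?case
    unfolding derived_zeta_snoc q_tuple_snoc by (metis derive_zeta_rat)
qed

lemma poly_eq_if_eventually_eq_cofinite:
  fixes p1 p2 :: "complex poly"
  assumes "\<forall>\<^sub>F T in cofinite. poly p1 T = poly p2 T"
  shows "p1 = p2"
proof (rule ccontr)
  assume "p1 \<noteq> p2"
  then have "finite {x. poly (p1 - p2) x = 0}" by (intro poly_roots_finite) simp
  moreover have "finite {x. poly p1 x \<noteq> poly p2 x}" using assms by (simp add: eventually_cofinite)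
  moreover have "UNIV = {x. poly (p1 - p2) x = 0} \<union> {x. poly p1 x \<noteq> poly p2 x}" by auto
  ultimately show False using infinite_UNIV_char_0 by (metis finite_Un)
qed

lemma alpha_coeff_zeta_rat:
  assumes "Q \<ge> 2" "\<forall>\<^sub>F T in cofinite. Z T = zeta_rat Q g p T"
  shows "coeff (THE p. \<forall>\<^sub>F T in cofinite.
           poly p T = (1 - T) * (1 - of_nat Q * T) * T powi (int g - 1) * Z T) 0 = poly p 0"
proof -
  let ?F = "\<lambda>T. (1 - T) * (1 - of_nat Q * T) * T powi (int g - 1) * Z T"
  have "poly p T = ?F T" if "T \<notin> {0, 1, 1 / of_nat Q}" "Z T = zeta_rat Q g p T" for T
  proof -
    have "1 - T \<noteq> 0" "1 - of_nat Q * T \<noteq> 0" "T \<noteq> 0"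
      using that(1) assms(1) by (auto simp: field_simps)
    moreover have "T powi (int g - 1) * T powi (1 - int g) = 1"
      using power_int_add[of T "int g - 1" "1 - int g"] \<open>T \<noteq> 0\<close> by simp
    moreover have "?F T = (T powi (int g - 1) * T powi (1 - int g)) * poly p T
        * (((1 - T) * (1 - of_nat Q * T)) / ((1 - T) * (1 - of_nat Q * T)))"
      unfolding that(2) zeta_rat_def by (simp only: times_divide_eq_right times_divide_eq_left mult_ac)
    ultimately show ?thesis by simp
  qed
  moreover have "\<forall>\<^sub>F T in cofinite. T \<notin> {0, 1, 1 / of_nat Q}"
    by (simp add: eventually_cofinite)
  ultimately have p: "\<forall>\<^sub>F T in cofinite. poly p T = ?F T"
    using assms(2) by (auto elim: eventually_elim2)
  have "(THE p. \<forall>\<^sub>F T in cofinite. poly p T = ?F T) = p"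
  proof (rule the_equality[where P="\<lambda>p. \<forall>\<^sub>F T in cofinite. poly p T = ?F T", OF p])
    fix p2 assume "\<forall>\<^sub>F T in cofinite. poly p2 T = ?F T"
    with p have "\<forall>\<^sub>F T in cofinite. poly p2 T = poly p T" by eventually_elim simp
    then show "p2 = p" by (rule poly_eq_if_eventually_eq_cofinite)
  qed
  then show ?thesis by (simp add: poly_0_coeff_0)
qed

lemma alpha_inv_snoc:
  assumes "curve_zeta_data q g P" "\<forall>k\<in>set ms. k > 0" "n \<ge> 1"
  shows "alpha_inv q g P (ms @ [n]) =
           of_nat (q_tuple q ms) powi (int (n choose 2) * (int g - 1)) * alpha_inv q g P ms
           * (\<Sum>ks\<in>compositions (n - 1). comp_coeff (q_tuple q ms) (derived_zeta q g P ms) ks)"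
proof -
  define Q where "Q = q_tuple q ms"
  have Q: "Q \<ge> 2" unfolding Q_def using q_tuple_ge_2 curve_zeta_data_q_ge_2 assms by blast
  obtain p where p: "zeta_fe_poly Q g p" "\<forall>\<^sub>F T in cofinite. derived_zeta q g P ms T = zeta_rat Q g p T"
    using derived_zeta_eq_zeta_rat[OF assms(1,2)] unfolding Q_def by blast
  obtain p' where p': "\<forall>\<^sub>F T in cofinite. derive_zeta Q g n (derived_zeta q g P ms) T = zeta_rat (Q ^ n) g p' T"
    "poly p' 0 = of_nat Q powi (int (n choose 2) * (int g - 1)) * poly p 0
                  * (\<Sum>ks\<in>compositions (n - 1). comp_coeff Q (derived_zeta q g P ms) ks)"
    using derive_zeta_rat[OF Q assms(3) p] by blast
  have "Q \<le> Q ^ n" using Q assms(3) by (simp add: self_le_power)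
  then have "Q ^ n \<ge> 2" using Q by linarith
  then show ?thesis
    unfolding alpha_inv_def q_tuple_snoc derived_zeta_snoc Q_def[symmetric]
    using alpha_coeff_zeta_rat[OF _ p'(1)] alpha_coeff_zeta_rat[OF Q p(2)] p'(2) by simp
qed

lemma beta_inv_snoc:
  assumes "curve_zeta_data q g P" "\<forall>k\<in>set ms. k > 0" "n \<ge> 1"
  shows "beta_inv q g P (ms @ [n]) =
           of_nat (q_tuple q ms) powi (int (n choose 2) * (int g - 1))
           * (\<Sum>ks\<in>compositions n. comp_coeff (q_tuple q ms) (derived_zeta q g P ms) ks)"
proof -
  have Q: "q_tuple q ms \<ge> 2" using q_tuple_ge_2 curve_zeta_data_q_ge_2 assms by blast
  obtain p where "zeta_fe_poly (q_tuple q ms) g p"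
      "\<forall>\<^sub>F T in cofinite. derived_zeta q g P ms T = zeta_rat (q_tuple q ms) g p T"
    using derived_zeta_eq_zeta_rat[OF assms(1,2)] by blast
  then show ?thesis
    using derive_zeta_rat[OF Q assms(3)] unfolding beta_inv_def derived_zeta_snoc by blast
qed

theorem theorem2p7:
  fixes q g :: nat and P :: "int poly" and ms :: "nat list" and n :: nat
  assumes "curve_zeta_data q g P"
    and "\<forall>k\<in>set ms. k > 0"
    and "n > 0"
  shows "alpha_inv q g P (ms @ [n + 1]) =
           of_nat (q_tuple q ms) powi (int n * (int g - 1)) * alpha_inv q g P ms
           * beta_inv q g P (ms @ [n])"
proof -
  let ?Q = "of_nat (q_tuple q ms) :: complex"
  let ?S = "\<Sum>ks\<in>compositions n. comp_coeff (q_tuple q ms) (derived_zeta q g P ms) ks"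
  have "q_tuple q ms \<ge> 2"
    using q_tuple_ge_2 curve_zeta_data_q_ge_2 assms(1,2) by blast
  moreover have "int ((n + 1) choose 2) * (int g - 1) = int n * (int g - 1) + int (n choose 2) * (int g - 1)"
    by (simp add: numeral_2_eq_2 algebra_simps)
  ultimately have Q_power: "?Q powi (int ((n + 1) choose 2) * (int g - 1))
                   = ?Q powi (int n * (int g - 1)) * ?Q powi (int (n choose 2) * (int g - 1))"
    by (simp add: power_int_add)
  have "alpha_inv q g P (ms @ [n + 1]) = ?Q powi (int ((n + 1) choose 2) * (int g - 1)) * alpha_inv q g P ms * ?S"
    using alpha_inv_snoc[OF assms(1,2), of "n + 1"] by simp
  moreover have "beta_inv q g P (ms @ [n]) = ?Q powi (int (n choose 2) * (int g - 1)) * ?S"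
    using beta_inv_snoc[OF assms(1,2), of n] assms(3) by simp
  ultimately show ?thesis
    unfolding Q_power by (simp only: mult_ac)
qed

end
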